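(* Let $f\colon G\to H$ and $g\colon G\to K$ be graph maps. (1) For integers $p\ge0$ and $q_1,q_2\ge1$, the commutative square \[\begin{array}{ccc} G\square I_p&\xrightarrow{\ r_p(f,\mathrm{id})\ }&\mathrm{Cyl}_{p+q_1}(f,\mathrm{id}_G)\\ {\scriptstyle \ell_p(\mathrm{id},g)}\downarrow&&\downarrow{\scriptstyle \ell_{p+q_1}(f,g)}\\ \mathrm{Cyl}_{p+q_2}(\mathrm{id}_G,g)&\xrightarrow{\ r_{p+q_2}(f,g)\ }&\mathrm{Cyl}_{p+q_1+q_2}(f,g)\end{array}\] is a $(p+1)$-skeletal pushout. (2) If $f$ is injective, (1) also holds when $q_1=0$. (3) If $g$ is injective, (1) also holds when $q_2=0$.
   Context: Graphs are sets with a reflexive symmetric relation; graph maps preserve it. $I_m$ has vertices $0,\dots,m$ and edges $i\sim i+1$; $G\square H$ has vertex set $V(G)\times V(H)$ and $(v,w)\sim(v',w')$ iff ($v=v'$, $w\sim w'$) or ($v\sim v'$, $w=w'$). For $f\colon G\to H$, $g\colon G\to K$, $\mathrm{Cyl}_m(f,g)$ is the quotient of $H\sqcup(G\square I_m)\sqcup K$ by $(v,0)\sim f(v)$, $(v,m)\sim g(v)$ (a colimit in graphs); in particular $\mathrm{Cyl}_p(\mathrm{id}_G,\mathrm{id}_G)\cong G\square I_p$. For $0\le k\le m$: $\ell_k(f,g)\colon\mathrm{Cyl}_k(f,\mathrm{id}_G)\to\mathrm{Cyl}_m(f,g)$ is the identity on $H$ and sends $(v,t)\mapsto(v,t)$;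 $r_k(f,g)\colon\mathrm{Cyl}_k(\mathrm{id}_G,g)\to\mathrm{Cyl}_m(f,g)$ is the identity on $K$ and sends $(v,t)\mapsto(v,t+m-k)$. The $1$-nerve $N_1G$ is the cubical set (presheaf on the box category with faces, degeneracies and connections) whose $k$-cubes are graph maps $I_1^{\square k}\to G$; $\operatorname{sk}^n$ is the subobject generated by cubes of dimension $\le n$. A commutative square of graphs is an $n$-skeletal pushout if applying $\operatorname{sk}^n\circ N_1$ yields a pushout of cubical sets. *)

theory Defs
  imports Main
begin

record 'a graph =
  verts :: "'a set"
  edge  :: "'a \<Rightarrow> 'a \<Rightarrow> bool"

definition is_graph :: "'a graph \<Rightarrow> bool" where
  "is_graph G \<longleftrightarrow> (\<forall>x\<in>verts G. edge G x x) \<and> (\<forall>x y. edge G x y \<longrightarrow> edge G y x)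
     \<and> (\<forall>x y. edge G x y \<longrightarrow> x \<in> verts G \<and> y \<in> verts G)"

definition graph_map :: "'a graph \<Rightarrow> 'b graph \<Rightarrow> ('a \<Rightarrow> 'b) \<Rightarrow> bool" where
  "graph_map G H f \<longleftrightarrow> (\<forall>x\<in>verts G. f x \<in> verts H)
     \<and> (\<forall>x y. edge G x y \<longrightarrow> edge H (f x) (f y))"

definition interval :: "nat \<Rightarrow> nat graph" where
  "interval m = \<lparr> verts = {0..m},
     edge = (\<lambda>i j. i \<le> m \<and> j \<le> m \<and> (i = j \<or> i = Suc j \<or> j = Suc i)) \<rparr>"

definition box :: "'a graph \<Rightarrow> 'b graph \<Rightarrow> ('a \<times> 'b) graph" where
  "box G H = \<lparr> verts = verts G \<times> verts H,
     edge = (\<lambda>(v,w) (v',w'). (v = v' \<and> v \<in> verts G \<and> edge H w w')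
                            \<or> (edge G v v' \<and> w = w' \<and> w \<in> verts H)) \<rparr>"

text \<open>Quotient of a graph by the equivalence relation generated by R (colimit in graphs):
  vertices are equivalence classes, two classes are adjacent iff they have adjacent representatives.\<close>
definition gen_eqv :: "'a set \<Rightarrow> ('a \<times> 'a) set \<Rightarrow> ('a \<times> 'a) set" where
  "gen_eqv U R = (R \<union> R\<inverse>)\<^sup>* \<inter> (U \<times> U)"

definition quot_graph :: "'a graph \<Rightarrow> ('a \<times> 'a) set \<Rightarrow> 'a set graph" where
  "quot_graph U R = \<lparr> verts = verts U // gen_eqv (verts U) R,
     edge = (\<lambda>X Y. X \<in> verts U // gen_eqv (verts U) R \<and> Y \<in> verts U // gen_eqv (verts U) R
                   \<and> (\<exists>x\<in>X. \<exists>y\<in>Y. edge U x y)) \<rparr>"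

definition cyl_pre :: "'g graph \<Rightarrow> 'h graph \<Rightarrow> 'k graph \<Rightarrow> nat \<Rightarrow> ('h + ('g \<times> nat) + 'k) graph" where
  "cyl_pre G H K m = \<lparr> verts = Inl ` verts H \<union> Inr ` Inl ` verts (box G (interval m)) \<union> Inr ` Inr ` verts K,
     edge = (\<lambda>u v. case (u, v) of
               (Inl a, Inl b) \<Rightarrow> edge H a b
             | (Inr (Inl a), Inr (Inl b)) \<Rightarrow> edge (box G (interval m)) a b
             | (Inr (Inr a), Inr (Inr b)) \<Rightarrow> edge K a b
             | _ \<Rightarrow> False) \<rparr>"

definition cyl_rel :: "'g graph \<Rightarrow> ('g \<Rightarrow> 'h) \<Rightarrow> ('g \<Rightarrow> 'k) \<Rightarrow> nat \<Rightarrow> (('h + ('g \<times> nat) + 'k) \<times> ('h + ('g \<times> nat) + 'k)) set" where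
  "cyl_rel G f g m = {(Inr (Inl (v, 0)), Inl (f v)) | v. v \<in> verts G}
                    \<union> {(Inr (Inl (v, m)), Inr (Inr (g v))) | v. v \<in> verts G}"

definition cyl :: "'g graph \<Rightarrow> 'h graph \<Rightarrow> 'k graph \<Rightarrow> ('g \<Rightarrow> 'h) \<Rightarrow> ('g \<Rightarrow> 'k) \<Rightarrow> nat
    \<Rightarrow> ('h + ('g \<times> nat) + 'k) set graph" where
  "cyl G H K f g m = quot_graph (cyl_pre G H K m) (cyl_rel G f g m)"

definition cyl_cls :: "'g graph \<Rightarrow> 'h graph \<Rightarrow> 'k graph \<Rightarrow> ('g \<Rightarrow> 'h) \<Rightarrow> ('g \<Rightarrow> 'k) \<Rightarrow> nat
    \<Rightarrow> ('h + ('g \<times> nat) + 'k) \<Rightarrow> ('h + ('g \<times> nat) + 'k) set" where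
  "cyl_cls G H K f g m x = gen_eqv (verts (cyl_pre G H K m)) (cyl_rel G f g m) `` {x}"

text \<open>l_k(f,g) : Cyl_k(f, id_G) \<rightarrow> Cyl_m(f,g): identity on H, (v,t) \<mapsto> (v,t)
  (and hence the copy of G at the far end, identified with (v,k), goes to (v,k)).\<close>
definition lmap :: "'g graph \<Rightarrow> 'h graph \<Rightarrow> 'k graph \<Rightarrow> ('g \<Rightarrow> 'h) \<Rightarrow> ('g \<Rightarrow> 'k) \<Rightarrow> nat \<Rightarrow> nat
    \<Rightarrow> ('h + ('g \<times> nat) + 'g) set \<Rightarrow> ('h + ('g \<times> nat) + 'k) set" where
  "lmap G H K f g k m X = cyl_cls G H K f g m
     (case (SOME x. x \<in> X) of
        Inl h \<Rightarrow> Inl h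
      | Inr (Inl (v, t)) \<Rightarrow> Inr (Inl (v, t))
      | Inr (Inr v) \<Rightarrow> Inr (Inl (v, k)))"

text \<open>r_k(f,g) : Cyl_k(id_G, g) \<rightarrow> Cyl_m(f,g): identity on K, (v,t) \<mapsto> (v,t+m-k)
  (and hence the copy of G at the near end, identified with (v,0), goes to (v,m-k)).\<close>
definition rmap :: "'g graph \<Rightarrow> 'h graph \<Rightarrow> 'k graph \<Rightarrow> ('g \<Rightarrow> 'h) \<Rightarrow> ('g \<Rightarrow> 'k) \<Rightarrow> nat \<Rightarrow> nat
    \<Rightarrow> ('g + ('g \<times> nat) + 'k) set \<Rightarrow> ('h + ('g \<times> nat) + 'k) set" where
  "rmap G H K f g k m X = cyl_cls G H K f g m
     (case (SOME x. x \<in> X) of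
        Inl v \<Rightarrow> Inr (Inl (v, m - k))
      | Inr (Inl (v, t)) \<Rightarrow> Inr (Inl (v, t + (m - k)))
      | Inr (Inr w) \<Rightarrow> Inr (Inr w))"

text \<open>The isomorphism G box I_p \<cong> Cyl_p(id_G, id_G).\<close>
definition cyl_incl :: "'g graph \<Rightarrow> nat \<Rightarrow> ('g \<times> nat) \<Rightarrow> ('g + ('g \<times> nat) + 'g) set" where
  "cyl_incl G p vt = cyl_cls G G G id id p (Inr (Inl vt))"

text \<open>I_1^{box k}, with vertex set the boolean lists of length k.\<close>
definition cube_graph :: "nat \<Rightarrow> bool list graph" where
  "cube_graph k = \<lparr> verts = {x. length x = k},
     edge = (\<lambda>x y. length x = k \<and> length y = k \<and> card {i. i < k \<and> x ! i \<noteq> y ! i} \<le> 1) \<rparr>"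

text \<open>k-cubes of N_1 G: graph maps I_1^{box k} \<rightarrow> G (extensional: undefined off the vertex set).\<close>
definition cubes :: "'a graph \<Rightarrow> nat \<Rightarrow> (bool list \<Rightarrow> 'a) set" where
  "cubes G k = {c. graph_map (cube_graph k) G c \<and> (\<forall>x. length x \<noteq> k \<longrightarrow> c x = undefined)}"

definition insert_at :: "nat \<Rightarrow> bool \<Rightarrow> bool list \<Rightarrow> bool list" where
  "insert_at i e x = take i x @ [e] @ drop i x"

definition remove_at :: "nat \<Rightarrow> bool list \<Rightarrow> bool list" where
  "remove_at i x = take i x @ drop (Suc i) x"

definition connect_at :: "nat \<Rightarrow> (bool \<Rightarrow> bool \<Rightarrow> bool) \<Rightarrow> bool list \<Rightarrow> bool list" where
  "connect_at i op x = take i x @ [op (x ! i) (x ! Suc i)] @ drop (Suc (Suc i)) x"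

text \<open>Morphisms [1]^k \<rightarrow> [1]^m of the box category with connections:
  composites of faces, degeneracies and connections (max and min).\<close>
inductive boxmor :: "nat \<Rightarrow> nat \<Rightarrow> (bool list \<Rightarrow> bool list) \<Rightarrow> bool" where
  bid: "boxmor k k id"
| bface: "boxmor k n \<theta> \<Longrightarrow> i \<le> n \<Longrightarrow> boxmor k (Suc n) (insert_at i e \<circ> \<theta>)"
| bdegen: "boxmor k (Suc n) \<theta> \<Longrightarrow> i \<le> n \<Longrightarrow> boxmor k n (remove_at i \<circ> \<theta>)"
| bconn_max: "boxmor k (Suc (Suc n)) \<theta> \<Longrightarrow> i \<le> n \<Longrightarrow> boxmor k (Suc n) (connect_at i (\<or>) \<circ> \<theta>)"
| bconn_min: "boxmor k (Suc (Suc n)) \<theta> \<Longrightarrow> i \<le> n \<Longrightarrow> boxmor k (Suc n) (connect_at i (\<and>) \<circ> \<theta>)"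

text \<open>k-cubes of sk^n N_1 G: those obtained from cubes of dimension \<le> n by a structure map.\<close>
definition skcubes :: "nat \<Rightarrow> 'a graph \<Rightarrow> nat \<Rightarrow> (bool list \<Rightarrow> 'a) set" where
  "skcubes n G k = {c \<in> cubes G k. \<exists>m \<theta> d. m \<le> n \<and> boxmor k m \<theta> \<and> d \<in> cubes G m
                       \<and> (\<forall>x. length x = k \<longrightarrow> c x = d (\<theta> x))}"

definition postc :: "nat \<Rightarrow> ('a \<Rightarrow> 'b) \<Rightarrow> (bool list \<Rightarrow> 'a) \<Rightarrow> (bool list \<Rightarrow> 'b)" where
  "postc k \<phi> c = (\<lambda>x. if length x = k then \<phi> (c x) else undefined)"

text \<open>A commutative square of sets A \<rightarrow> B (a), A \<rightarrow> C (b), B \<rightarrow> D (c), C \<rightarrow> D (d) is a pushout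
  iff the induced map from (B + C) modulo the equivalence generated by a x ~ b x to D is bijective.\<close>
definition pushout_set :: "'a set \<Rightarrow> 'b set \<Rightarrow> 'c set \<Rightarrow> 'd set
    \<Rightarrow> ('a \<Rightarrow> 'b) \<Rightarrow> ('a \<Rightarrow> 'c) \<Rightarrow> ('b \<Rightarrow> 'd) \<Rightarrow> ('c \<Rightarrow> 'd) \<Rightarrow> bool" where
  "pushout_set A B C D a b c d \<longleftrightarrow>
     (\<forall>x\<in>A. a x \<in> B \<and> b x \<in> C \<and> c (a x) = d (b x))
   \<and> (\<forall>y\<in>B. c y \<in> D) \<and> (\<forall>z\<in>C. d z \<in> D)
   \<and> (\<forall>w\<in>D. \<exists>u\<in>B <+> C. case_sum c d u = w)
   \<and> (\<forall>u\<in>B <+> C. \<forall>v\<in>B <+> C. case_sum c d u = case_sum c d v \<longrightarrow>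
        (u, v) \<in> ({(Inl (a x), Inr (b x)) | x. x \<in> A} \<union> {(Inl (a x), Inr (b x)) | x. x \<in> A}\<inverse>)\<^sup>*)"

text \<open>A square of graphs is an n-skeletal pushout if sk^n N_1 turns it into a pushout of
  cubical sets; colimits of presheaves are computed dimensionwise.\<close>
definition skel_pushout :: "nat \<Rightarrow> 'a graph \<Rightarrow> 'b graph \<Rightarrow> 'c graph \<Rightarrow> 'd graph
    \<Rightarrow> ('a \<Rightarrow> 'b) \<Rightarrow> ('a \<Rightarrow> 'c) \<Rightarrow> ('b \<Rightarrow> 'd) \<Rightarrow> ('c \<Rightarrow> 'd) \<Rightarrow> bool" where
  "skel_pushout n A B C D a b c d \<longleftrightarrow>
     (\<forall>k. pushout_set (skcubes n A k) (skcubes n B k) (skcubes n C k) (skcubes n D k)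
            (postc k a) (postc k b) (postc k c) (postc k d))"

definition cyl_square :: "'g graph \<Rightarrow> 'h graph \<Rightarrow> 'k graph \<Rightarrow> ('g \<Rightarrow> 'h) \<Rightarrow> ('g \<Rightarrow> 'k)
    \<Rightarrow> nat \<Rightarrow> nat \<Rightarrow> nat \<Rightarrow> bool" where
  "cyl_square G H K f g p q1 q2 \<longleftrightarrow>
     skel_pushout (Suc p)
       (box G (interval p)) (cyl G H G f id (p + q1)) (cyl G G K id g (p + q2)) (cyl G H K f g (p + q1 + q2))
       (rmap G H G f id p (p + q1) \<circ> cyl_incl G p)
       (lmap G G K id g p (p + q2) \<circ> cyl_incl G p)
       (lmap G H K f g (p + q1) (p + q1 + q2))
       (rmap G H K f g (p + q2) (p + q1 + q2))"

end

theory Submission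
  imports Defs
begin

(* The square is compared with the pushout dimension by dimension, on cubes. The maps c and d
   embed B = Cyl_{p+q1}(f,id) and C = Cyl_{p+q2}(id,g) into D = Cyl_{p+q1+q2}(f,g): c is
   injective because q2 > 0 or g is injective, d because q1 > 0 or f is injective. Moreover
   A = G box I_p is the intersection of their images, i.e. the pullback of B and C over D, on
   vertices and on edges.

   Injectivity and the pullback property account for all identifications: two matching cubes of
   the skeleta of B and C, presented through a structure map theta of the box category, come
   from a cube of A, because theta maps onto a face of the cube and has a section over it.

   Surjectivity is where the bound p+1 on the dimension enters. Along an edge of D the cylinder
   coordinate (the level) changes by at most 1, so along an m-cube by at most m. B covers the
   levels 0..p+q1 and C the levels q1..p+q1+q2; these ranges share p+1 values, so every cube of
   dimension at most p+1 lies over one of them. If q2 = 0 the top level of B is the end glued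
   to K, whose vertices lie in B only when they are reached from inside the cylinder; a cube of
   D that spreads over the whole range of B reaches that level only at a corner whose neighbours
   all lie below it (and symmetrically for C when q1 = 0). *)

section \<open>Cube graphs and the structure maps of the box category\<close>

lemma cube_graph_verts [simp]: "verts (cube_graph k) = {x. length x = k}"
  by (simp add: cube_graph_def)

lemma cube_graph_edge_iff:
  "edge (cube_graph k) x y \<longleftrightarrow> length x = k \<and> length y = k \<and>
     (\<forall>i j. i < k \<longrightarrow> j < k \<longrightarrow> x!i \<noteq> y!i \<longrightarrow> x!j \<noteq> y!j \<longrightarrow> i = j)"
proof -
  have "finite {i. i < k \<and> x ! i \<noteq> y ! i}" by simp
  then show ?thesis
    unfolding cube_graph_def by (auto simp: card_le_Suc0_iff_eq)
qed

lemma cube_graph_edge_length: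
  "edge (cube_graph k) x y \<Longrightarrow> length x = k \<and> length y = k"
  by (simp add: cube_graph_edge_iff)

lemma cube_graph_edge_flip:
  assumes "length x = k" "i < k"
  shows "edge (cube_graph k) x (x[i := \<not> x!i])"
  using assms by (auto simp: cube_graph_edge_iff nth_list_update)

lemma cube_has_neighbour:
  assumes "length y = m" "1 \<le> m"
  obtains y' where "edge (cube_graph m) y y'" "y' \<noteq> y"
proof -
  have "y[0 := \<not> y!0] ! 0 \<noteq> y ! 0" using assms by simp
  then have "y[0 := \<not> y!0] \<noteq> y" by auto
  moreover have "edge (cube_graph m) y (y[0 := \<not> y!0])" using cube_graph_edge_flip assms by simp
  ultimately show thesis using that by blast
qed

lemma cube_edge_transfer:
  assumes "edge (cube_graph n) x y" "length x' = m" "length y' = m"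
    and changed: "\<And>j. j < m \<Longrightarrow> x'!j \<noteq> y'!j \<Longrightarrow> \<exists>a<n. a \<in> S j \<and> x!a \<noteq> y!a"
    and disjoint: "\<And>j j' a. j \<noteq> j' \<Longrightarrow> a \<in> S j \<Longrightarrow> a \<in> S j' \<Longrightarrow> False"
  shows "edge (cube_graph m) x' y'"
  unfolding cube_graph_edge_iff
proof (intro conjI allI impI)
  fix a b assume "a < m" "b < m" "x'!a \<noteq> y'!a" "x'!b \<noteq> y'!b"
  then obtain a1 b1 where "a1 < n" "a1 \<in> S a" "x!a1 \<noteq> y!a1" "b1 < n" "b1 \<in> S b" "x!b1 \<noteq> y!b1"
    using changed by meson
  moreover have "a1 = b1" using assms(1) calculation by (auto simp: cube_graph_edge_iff)
  ultimately show "a = b" using disjoint by blast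
qed (use assms in auto)

lemma length_insert_at [simp]: "i \<le> length x \<Longrightarrow> length (insert_at i e x) = Suc (length x)"
  by (simp add: insert_at_def)

lemma nth_insert_at:
  "i \<le> length x \<Longrightarrow> j \<le> length x \<Longrightarrow>
   insert_at i e x ! j = (if j < i then x!j else if j = i then e else x!(j - 1))"
  by (auto simp: insert_at_def nth_append min_def)

lemma length_remove_at [simp]: "i < length x \<Longrightarrow> length (remove_at i x) = length x - 1"
  by (simp add: remove_at_def)

lemma nth_remove_at:
  "i < length x \<Longrightarrow> j < length x - 1 \<Longrightarrow> remove_at i x ! j = (if j < i then x!j else x!(Suc j))"
  by (auto simp: remove_at_def nth_append min_def)

lemma length_connect_at [simp]: "Suc i < length x \<Longrightarrow> length (connect_at i op x) = length x - 1"
  by (simp add: connect_at_def)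

lemma nth_connect_at:
  "Suc i < length x \<Longrightarrow> j < length x - 1 \<Longrightarrow>
   connect_at i op x ! j = (if j < i then x!j else if j = i then op (x!i) (x!Suc i) else x!(Suc j))"
  by (auto simp: connect_at_def nth_append min_def)

lemma cube_edge_insert_at:
  assumes "edge (cube_graph n) x y" "i \<le> n"
  shows "edge (cube_graph (Suc n)) (insert_at i e x) (insert_at i e y)"
proof -
  have l: "length x = n" "length y = n" using assms cube_graph_edge_length by auto
  show ?thesis
  proof (rule cube_edge_transfer[OF assms(1), where S="\<lambda>j. if j < i then {j} else if j = i then {} else {j - 1}"])
    fix j assume "j < Suc n" "insert_at i e x ! j \<noteq> insert_at i e y ! j"
    then show "\<exists>a<n. a \<in> (if j < i then {j} else if j = i then {} else {j - 1}) \<and> x ! a \<noteq> y ! a"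
      using l assms(2) by (auto simp: nth_insert_at split: if_splits)
  qed (use l assms in \<open>auto split: if_splits\<close>)
qed

lemma cube_edge_remove_at:
  assumes "edge (cube_graph (Suc n)) x y" "i \<le> n"
  shows "edge (cube_graph n) (remove_at i x) (remove_at i y)"
proof -
  have l: "length x = Suc n" "length y = Suc n" using assms cube_graph_edge_length by auto
  show ?thesis
  proof (rule cube_edge_transfer[OF assms(1), where S="\<lambda>j. if j < i then {j} else {Suc j}"])
    fix j assume "j < n" "remove_at i x ! j \<noteq> remove_at i y ! j"
    then show "\<exists>a<Suc n. a \<in> (if j < i then {j} else {Suc j}) \<and> x ! a \<noteq> y ! a"
      using l assms(2) by (auto simp: nth_remove_at split: if_splits)
  qed (use l assms in \<open>auto split: if_splits\<close>)
qed

lemma cube_edge_connect_at: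
  assumes "edge (cube_graph (Suc (Suc n))) x y" "i \<le> n"
  shows "edge (cube_graph (Suc n)) (connect_at i op x) (connect_at i op y)"
proof -
  have l: "length x = Suc (Suc n)" "length y = Suc (Suc n)" using assms cube_graph_edge_length by auto
  let ?S = "\<lambda>j. if j < i then {j} else if j = i then {i, Suc i} else {Suc j}"
  show ?thesis
  proof (rule cube_edge_transfer[OF assms(1), where S="?S"])
    fix j assume j: "j < Suc n" "connect_at i op x ! j \<noteq> connect_at i op y ! j"
    show "\<exists>a<Suc (Suc n). a \<in> ?S j \<and> x ! a \<noteq> y ! a"
    proof (cases "j = i")
      case True
      then have "op (x!i) (x!Suc i) \<noteq> op (y!i) (y!Suc i)"
        using j l assms(2) by (simp add: nth_connect_at)
      then have "x!i \<noteq> y!i \<or> x!Suc i \<noteq> y!Suc i" by fastforce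
      then obtain a where "a \<in> {i, Suc i}" "x!a \<noteq> y!a" by blast
      then show ?thesis using True assms(2) by (intro exI[of _ a]) auto
    next
      case False
      then show ?thesis using j l assms(2) by (auto simp: nth_connect_at split: if_splits)
    qed
  qed (use l assms in \<open>auto split: if_splits\<close>)
qed

lemma cube_edge_update_coord:
  assumes "edge (cube_graph n) x y" "i < n"
  shows "edge (cube_graph n) (x[i := h (x!i)]) (y[i := h (y!i)])"
proof (rule cube_edge_transfer[OF assms(1), where S="\<lambda>j. {j}"])
  fix j assume "j < n" "x[i := h (x!i)] ! j \<noteq> y[i := h (y!i)] ! j"
  then show "\<exists>a<n. a \<in> {j} \<and> x ! a \<noteq> y ! a"
    using assms cube_graph_edge_length by (cases "j = i"; cases "x!i = y!i") (auto simp: nth_list_update)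
qed (use assms cube_graph_edge_length in auto)

lemma cube_edge_split_coord:
  assumes "edge (cube_graph (Suc n)) x y" "i \<le> n"
    and const: "(\<forall>z z'. ta z = ta z') \<or> (\<forall>z z'. tb z = tb z')"
  shows "edge (cube_graph (Suc (Suc n))) (take i x @ [ta (x!i), tb (x!i)] @ drop (Suc i) x)
           (take i y @ [ta (y!i), tb (y!i)] @ drop (Suc i) y)"
proof -
  have l: "length x = Suc n" "length y = Suc n" and "i < Suc n"
    using assms(1,2) cube_graph_edge_length by auto
  from const show ?thesis
  proof
    assume const_ta: "\<forall>z z'. ta z = ta z'"
    have "take i u @ [ta (u!i), tb (u!i)] @ drop (Suc i) u = insert_at i (ta False) (u[i := tb (u!i)])"
      if "length u = Suc n" for u
    proof -
      have "ta (u!i) = ta False" using const_ta by blast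
      then show ?thesis using that \<open>i < Suc n\<close> by (simp add: insert_at_def upd_conv_take_nth_drop)
    qed
    then show ?thesis
      using l \<open>i < Suc n\<close> assms(2) by (simp add: cube_edge_insert_at cube_edge_update_coord assms(1))
  next
    assume const_tb: "\<forall>z z'. tb z = tb z'"
    have "take i u @ [ta (u!i), tb (u!i)] @ drop (Suc i) u = insert_at (Suc i) (tb False) (u[i := ta (u!i)])"
      if "length u = Suc n" for u
    proof -
      have "tb (u!i) = tb False" using const_tb by blast
      then show ?thesis using that \<open>i < Suc n\<close>
        by (simp add: insert_at_def upd_conv_take_nth_drop take_Suc_conv_app_nth)
    qed
    then show ?thesis using l \<open>i < Suc n\<close> by (simp add: cube_edge_insert_at cube_edge_update_coord assms(1))
  qed
qed

lemma boxmor_length: "boxmor k m \<theta> \<Longrightarrow> length x = k \<Longrightarrow> length (\<theta> x) = m"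
  by (induction arbitrary: x rule: boxmor.induct) auto

lemma boxmor_cube_edge:
  "boxmor k m \<theta> \<Longrightarrow> edge (cube_graph k) x y \<Longrightarrow> edge (cube_graph m) (\<theta> x) (\<theta> y)"
  by (induction arbitrary: x y rule: boxmor.induct)
    (auto intro: cube_edge_insert_at cube_edge_remove_at cube_edge_connect_at)

section \<open>Faces of cubes and sections of structure maps\<close>

text \<open>A face of the cube [1]^m is encoded by a list P of length m: coordinate j is
  fixed to b if P!j = Some b and free if P!j = None.\<close>

definition face_coord :: "bool option \<Rightarrow> bool \<Rightarrow> bool" where
  "face_coord c z = (case c of None \<Rightarrow> z | Some b \<Rightarrow> b)"

definition face_proj :: "bool option list \<Rightarrow> bool list \<Rightarrow> bool list" where
  "face_proj P x = map2 face_coord P x"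

definition in_face :: "bool option list \<Rightarrow> bool list \<Rightarrow> bool" where
  "in_face P x \<longleftrightarrow> length x = length P \<and> face_proj P x = x"

lemma face_coord_simps [simp]:
  "face_coord None z = z" "face_coord (Some b) z = b" "face_coord c (face_coord c z) = face_coord c z"
  by (simp_all add: face_coord_def split: option.splits)

lemma length_face_proj [simp]: "length x = length P \<Longrightarrow> length (face_proj P x) = length P"
  by (simp add: face_proj_def)

lemma nth_face_proj [simp]:
  "length x = length P \<Longrightarrow> j < length P \<Longrightarrow> face_proj P x ! j = face_coord (P!j) (x!j)"
  by (simp add: face_proj_def)

lemma in_face_iff:
  "in_face P x \<longleftrightarrow> length x = length P \<and> (\<forall>j<length P. face_coord (P!j) (x!j) = x!j)"
proof -
  have "face_proj P x = x \<longleftrightarrow> (\<forall>j<length P. face_proj P x ! j = x ! j)" if "length x = length P"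
    using that by (simp add: list_eq_iff_nth_eq)
  then show ?thesis by (auto simp: in_face_def)
qed

lemma face_proj_whole_cube: "length x = k \<Longrightarrow> face_proj (replicate k None) x = x"
  by (simp add: list_eq_iff_nth_eq)

lemma in_face_whole_cube: "in_face (replicate k None) x \<longleftrightarrow> length x = k"
  by (simp add: in_face_iff)

text \<open>\<sigma> maps the face P onto the face Q, with proj_P \<circ> t as a section over Q.\<close>

definition face_onto :: "nat \<Rightarrow> nat \<Rightarrow> (bool list \<Rightarrow> bool list) \<Rightarrow> bool option list
    \<Rightarrow> bool option list \<Rightarrow> (bool list \<Rightarrow> bool list) \<Rightarrow> bool" where
  "face_onto n m \<sigma> P Q t \<longleftrightarrow> length P = n \<and> length Q = m
     \<and> (\<forall>x. length x = m \<longrightarrow> length (t x) = n)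
     \<and> (\<forall>x y. edge (cube_graph m) x y \<longrightarrow> edge (cube_graph n) (t x) (t y))
     \<and> (\<forall>x. length x = m \<longrightarrow> \<sigma> (face_proj P (t x)) = face_proj Q x)
     \<and> (\<forall>w. in_face P w \<longrightarrow> in_face Q (\<sigma> w))"

lemma face_onto_id: "face_onto k k id (replicate k None) (replicate k None) id"
  by (auto simp: face_onto_def in_face_def intro: nth_equalityI)

lemma face_onto_comp:
  assumes "face_onto k n \<theta> P R s" "face_onto n m \<sigma> R Q t"
  shows "face_onto k m (\<sigma> \<circ> \<theta>) P Q (s \<circ> t)"
  using assms unfolding face_onto_def by auto

lemma face_onto_insert_at:
  assumes "length P = n" "i \<le> n"
  shows "face_onto n (Suc n) (insert_at i e) P (take i P @ [Some e] @ drop i P) (remove_at i)"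
  unfolding face_onto_def
proof (intro conjI allI impI)
  fix x :: "bool list" assume "length x = Suc n"
  then show "insert_at i e (face_proj P (remove_at i x)) = face_proj (take i P @ [Some e] @ drop i P) x"
    using assms by (intro nth_equalityI) (auto simp: nth_insert_at nth_remove_at nth_append min_def)
next
  fix w assume "in_face P w"
  then show "in_face (take i P @ [Some e] @ drop i P) (insert_at i e w)"
    using assms unfolding in_face_iff by (auto simp: nth_insert_at nth_append min_def)
qed (use assms cube_edge_remove_at in auto)

lemma face_onto_remove_at:
  assumes "length P = Suc n" "i \<le> n"
  shows "face_onto (Suc n) n (remove_at i) P (take i P @ drop (Suc i) P)
           (insert_at i (face_coord (P!i) False))"
  unfolding face_onto_def
proof (intro conjI allI impI)
  fix x :: "bool list" assume "length x = n"
  then show "remove_at i (face_proj P (insert_at i (face_coord (P!i) False) x))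
      = face_proj (take i P @ drop (Suc i) P) x"
    using assms by (intro nth_equalityI) (auto simp: nth_insert_at nth_remove_at nth_append min_def)
next
  fix w assume "in_face P w"
  then show "in_face (take i P @ drop (Suc i) P) (remove_at i w)"
    using assms unfolding in_face_iff by (auto simp: nth_remove_at nth_append min_def)
qed (use assms cube_edge_insert_at in auto)

text \<open>\<not> op True False is the neutral element of op.\<close>

lemma connection_coord_section:
  assumes "op = (\<or>) \<or> op = (\<and>)"
  shows "\<exists>ta tb c. (\<forall>z. face_coord a (ta z) = ta z \<and> face_coord b (tb z) = tb z
                        \<and> op (ta z) (tb z) = face_coord c z)
     \<and> (\<forall>u w. face_coord c (op (face_coord a u) (face_coord b w)) = op (face_coord a u) (face_coord b w))
     \<and> ((\<forall>z z'. ta z = ta z') \<or> (\<forall>z z'. tb z = tb z'))"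
proof -
  define ta where "ta = face_coord a"
  define tb where "tb z = (case b of Some \<beta> \<Rightarrow> \<beta> | None \<Rightarrow> if a = None then \<not> op True False else z)" for z
  define c where "c = (if \<forall>z. op (ta z) (tb z) = op (ta False) (tb False)
                         then Some (op (ta False) (tb False)) else None)"
  show ?thesis
    by (rule exI[of _ ta], rule exI[of _ tb], rule exI[of _ c])
      (use assms in \<open>cases a; cases b; auto simp: ta_def tb_def c_def\<close>)
qed

lemma nth_merge_coords:
  assumes "length P = Suc (Suc n)" "i \<le> n" "j < Suc n"
  shows "(take i P @ c # drop (Suc (Suc i)) P) ! j = (if j < i then P!j else if j = i then c else P ! Suc j)"
  using assms by (auto simp: nth_append min_def)

lemma nth_split_coord:
  assumes "length x = Suc n" "i \<le> n" "j < Suc (Suc n)"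
  shows "(take i x @ a # b # drop (Suc i) x) ! j =
     (if j < i then x!j else if j = i then a else if j = Suc i then b else x!(j - 1))"
  using assms by (auto simp: nth_append min_def numeral_2_eq_2 Suc_diff_Suc)

lemma connect_at_face_proj_split_coord:
  assumes "length P = Suc (Suc n)" "i \<le> n" "length x = Suc n"
    and sec: "\<forall>z. face_coord (P!i) (ta z) = ta z \<and> face_coord (P!Suc i) (tb z) = tb z
                \<and> op (ta z) (tb z) = face_coord c z"
  shows "connect_at i op (face_proj P (take i x @ [ta (x!i), tb (x!i)] @ drop (Suc i) x))
       = face_proj (take i P @ [c] @ drop (Suc (Suc i)) P) x"
    (is "connect_at i op (face_proj P ?t) = face_proj ?Q x")
proof (rule nth_equalityI)
  have lengths: "length ?t = length P" "length ?Q = Suc n" using assms(1-3) by simp_all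
  then show "length (connect_at i op (face_proj P ?t)) = length (face_proj ?Q x)"
    using assms(1-3) by simp
  fix j assume "j < length (connect_at i op (face_proj P ?t))"
  then have j: "j < Suc n" using lengths assms(1,2) by simp
  have proj_t: "face_proj P ?t ! j' = face_coord (P!j') (?t ! j')" if "j' < Suc (Suc n)" for j'
    using that lengths assms(1) by simp
  show "connect_at i op (face_proj P ?t) ! j = face_proj ?Q x ! j"
    using j assms lengths
    by (cases j i rule: linorder_cases) (simp_all add: nth_connect_at proj_t nth_split_coord nth_merge_coords)
qed

lemma in_face_connect_at:
  assumes "length P = Suc (Suc n)" "i \<le> n" and w: "in_face P w"
    and img: "\<forall>u w. face_coord c (op (face_coord (P!i) u) (face_coord (P!Suc i) w))
                     = op (face_coord (P!i) u) (face_coord (P!Suc i) w)"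
  shows "in_face (take i P @ [c] @ drop (Suc (Suc i)) P) (connect_at i op w)"
proof -
  have lw: "length w = Suc (Suc n)" and wP: "\<And>j. j < Suc (Suc n) \<Longrightarrow> face_coord (P!j) (w!j) = w!j"
    using w assms(1) by (auto simp: in_face_iff)
  have "face_coord ((take i P @ [c] @ drop (Suc (Suc i)) P) ! j) (connect_at i op w ! j) = connect_at i op w ! j"
    if j: "j < Suc n" for j
  proof (cases j i rule: linorder_cases)
    case equal
    have "face_coord (P!i) (w!i) = w!i" "face_coord (P!Suc i) (w!Suc i) = w!Suc i"
      using wP assms(2) by simp_all
    then have "face_coord c (op (w!i) (w!Suc i)) = op (w!i) (w!Suc i)"
      using img[rule_format, of "w!i" "w!Suc i"] by simp
    then show ?thesis using equal j lw assms(1,2) by (simp add: nth_connect_at nth_merge_coords)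
  qed (use j lw wP[of j] wP[of "Suc j"] assms(1,2) in \<open>simp_all add: nth_connect_at nth_merge_coords\<close>)
  then show ?thesis using lw assms(1,2) by (simp add: in_face_iff)
qed

lemma face_onto_connect_at:
  assumes op: "op = (\<or>) \<or> op = (\<and>)" and "length P = Suc (Suc n)" and "i \<le> n"
  shows "\<exists>Q t. face_onto (Suc (Suc n)) (Suc n) (connect_at i op) P Q t"
proof -
  obtain ta tb c where
    sec: "\<forall>z. face_coord (P!i) (ta z) = ta z \<and> face_coord (P!Suc i) (tb z) = tb z
                \<and> op (ta z) (tb z) = face_coord c z"
    and img: "\<forall>u w. face_coord c (op (face_coord (P!i) u) (face_coord (P!Suc i) w))
                     = op (face_coord (P!i) u) (face_coord (P!Suc i) w)"
    and const: "(\<forall>z z'. ta z = ta z') \<or> (\<forall>z z'. tb z = tb z')"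
    using connection_coord_section[OF op, of "P!i" "P!Suc i"] by blast
  define t where "t x = take i x @ [ta (x!i), tb (x!i)] @ drop (Suc i) x" for x :: "bool list"
  have "face_onto (Suc (Suc n)) (Suc n) (connect_at i op) P (take i P @ [c] @ drop (Suc (Suc i)) P) t"
    unfolding face_onto_def
  proof (intro conjI allI impI)
    fix x y assume "edge (cube_graph (Suc n)) x y"
    then show "edge (cube_graph (Suc (Suc n))) (t x) (t y)"
      using cube_edge_split_coord[OF _ assms(3) const] by (simp add: t_def)
  next
    fix x :: "bool list" assume "length x = Suc n"
    then show "connect_at i op (face_proj P (t x)) = face_proj (take i P @ [c] @ drop (Suc (Suc i)) P) x"
      unfolding t_def by (rule connect_at_face_proj_split_coord[OF assms(2,3) _ sec])
  next
    fix w assume "in_face P w"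
    then show "in_face (take i P @ [c] @ drop (Suc (Suc i)) P) (connect_at i op w)"
      by (rule in_face_connect_at[OF assms(2,3) _ img])
  qed (use assms(2,3) in \<open>simp_all add: t_def\<close>)
  then show ?thesis by blast
qed

lemma boxmor_face_onto:
  "boxmor k m \<theta> \<Longrightarrow> \<exists>Q s. face_onto k m \<theta> (replicate k None) Q s"
proof (induction rule: boxmor.induct)
  case (bid k)
  show ?case using face_onto_id by blast
next
  case (bface k n \<theta> i e)
  then obtain Q s where "face_onto k n \<theta> (replicate k None) Q s" by blast
  moreover from this have "length Q = n" by (simp add: face_onto_def)
  ultimately show ?case using face_onto_comp face_onto_insert_at bface.hyps by blast
next
  case (bdegen k n \<theta> i)
  then obtain Q s where "face_onto k (Suc n) \<theta> (replicate k None) Q s" by blast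
  moreover from this have "length Q = Suc n" by (simp add: face_onto_def)
  ultimately show ?case using face_onto_comp face_onto_remove_at bdegen.hyps by blast
next
  case (bconn_max k n \<theta> i)
  then obtain Q s where Qs: "face_onto k (Suc (Suc n)) \<theta> (replicate k None) Q s" by blast
  then have "length Q = Suc (Suc n)" by (simp add: face_onto_def)
  then obtain Q' t where "face_onto (Suc (Suc n)) (Suc n) (connect_at i (\<or>)) Q Q' t"
    using face_onto_connect_at[of "(\<or>)"] bconn_max.hyps by blast
  then show ?case using face_onto_comp[OF Qs] by blast
next
  case (bconn_min k n \<theta> i)
  then obtain Q s where Qs: "face_onto k (Suc (Suc n)) \<theta> (replicate k None) Q s" by blast
  then have "length Q = Suc (Suc n)" by (simp add: face_onto_def)
  then obtain Q' t where "face_onto (Suc (Suc n)) (Suc n) (connect_at i (\<and>)) Q Q' t"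
    using face_onto_connect_at[of "(\<and>)"] bconn_min.hyps by blast
  then show ?case using face_onto_comp[OF Qs] by blast
qed

lemma boxmor_regular:
  assumes "boxmor k m \<theta>"
  obtains s where "\<And>x. length x = m \<Longrightarrow> length (s x) = k"
    and "\<And>x y. edge (cube_graph m) x y \<Longrightarrow> edge (cube_graph k) (s x) (s y)"
    and "\<And>x. length x = k \<Longrightarrow> \<theta> (s (\<theta> x)) = \<theta> x"
proof -
  obtain Q s where Qs: "face_onto k m \<theta> (replicate k None) Q s"
    using boxmor_face_onto[OF assms] by blast
  have "\<theta> (s (\<theta> x)) = \<theta> x" if "length x = k" for x
  proof -
    have "in_face Q (\<theta> x)" using Qs that in_face_whole_cube unfolding face_onto_def by blast
    moreover have "length Q = m" using Qs by (simp add: face_onto_def)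
    ultimately have "length (\<theta> x) = m" by (simp add: in_face_def)
    then have "\<theta> (face_proj (replicate k None) (s (\<theta> x))) = \<theta> x"
      using Qs \<open>in_face Q (\<theta> x)\<close> by (simp add: face_onto_def in_face_def)
    then show ?thesis using Qs \<open>length (\<theta> x) = m\<close> by (simp add: face_onto_def face_proj_whole_cube)
  qed
  with Qs show thesis using that unfolding face_onto_def by blast
qed

section \<open>A criterion for skeletal pushouts\<close>

lemma cubesI:
  assumes "\<And>x. length x = k \<Longrightarrow> u x \<in> verts X"
    and "\<And>x y. edge (cube_graph k) x y \<Longrightarrow> edge X (u x) (u y)"
    and "\<And>x. length x \<noteq> k \<Longrightarrow> u x = undefined"
  shows "u \<in> cubes X k"
  using assms by (auto simp: cubes_def graph_map_def)

lemma cubesD: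
  assumes "u \<in> cubes X k"
  shows cubes_vert: "\<And>x. length x = k \<Longrightarrow> u x \<in> verts X"
    and cubes_edge: "\<And>x y. edge (cube_graph k) x y \<Longrightarrow> edge X (u x) (u y)"
    and cubes_undefined: "\<And>x. length x \<noteq> k \<Longrightarrow> u x = undefined"
  using assms by (auto simp: cubes_def graph_map_def)

lemma cubes_eqI:
  assumes "u \<in> cubes X k" "v \<in> cubes Y k" "\<And>x. length x = k \<Longrightarrow> u x = v x"
  shows "u = v"
proof
  fix x show "u x = v x"
    using assms cubes_undefined[OF assms(1)] cubes_undefined[OF assms(2)] by (cases "length x = k") auto
qed

lemma skcubes_cubes: "u \<in> skcubes n X k \<Longrightarrow> u \<in> cubes X k"
  by (simp add: skcubes_def)

lemma postc_cubes:
  assumes "u \<in> cubes X k" "graph_map X Y \<phi>"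
  shows "postc k \<phi> u \<in> cubes Y k"
  using assms unfolding postc_def
  by (intro cubesI) (auto simp: graph_map_def cubesD cube_graph_edge_iff)

lemma postc_skcubes:
  assumes "u \<in> skcubes n X k" "graph_map X Y \<phi>"
  shows "postc k \<phi> u \<in> skcubes n Y k"
proof -
  obtain m \<theta> e where "m \<le> n" "boxmor k m \<theta>" "e \<in> cubes X m" "\<forall>x. length x = k \<longrightarrow> u x = e (\<theta> x)"
    using assms(1) unfolding skcubes_def by blast
  moreover have "postc m \<phi> e \<in> cubes Y m" using postc_cubes calculation(3) assms(2) by blast
  ultimately show ?thesis
    using postc_cubes[OF skcubes_cubes[OF assms(1)] assms(2)] boxmor_length
    unfolding skcubes_def postc_def by fastforce
qed

lemma postc_inj:
  assumes "inj_on \<phi> (verts X)" "u \<in> cubes X k" "v \<in> cubes X k" "postc k \<phi> u = postc k \<phi> v"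
  shows "u = v"
proof (rule cubes_eqI[OF assms(2,3)])
  fix x :: "bool list" assume "length x = k"
  then show "u x = v x"
    using fun_cong[OF assms(4), of x] assms(1) cubes_vert[OF assms(2)] cubes_vert[OF assms(3)]
    by (auto simp: postc_def inj_on_def)
qed

lemma boxmor_precomp_skcubes:
  assumes "m \<le> n" "boxmor k m \<theta>" "e \<in> cubes X m"
  shows "(\<lambda>x. if length x = k then e (\<theta> x) else undefined) \<in> skcubes n X k"
proof -
  have "(\<lambda>x. if length x = k then e (\<theta> x) else undefined) \<in> cubes X k"
  proof (rule cubesI)
    fix x y assume xy: "edge (cube_graph k) x y"
    then show "edge X (if length x = k then e (\<theta> x) else undefined) (if length y = k then e (\<theta> y) else undefined)"
      using cubes_edge[OF assms(3) boxmor_cube_edge[OF assms(2) xy]] cube_graph_edge_length by simp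
  qed (use assms boxmor_length cubes_vert in fastforce)+
  then show ?thesis using assms unfolding skcubes_def by auto
qed

lemma skcube_lift:
  assumes "graph_map X Y \<phi>" and w: "w \<in> skcubes n Y k"
    and "m \<le> n" "boxmor k m \<theta>" "\<forall>x. length x = k \<longrightarrow> w x = e (\<theta> x)"
    and e': "e' \<in> cubes X m" "\<forall>x. length x = m \<longrightarrow> \<phi> (e' x) = e x"
  shows "\<exists>u\<in>skcubes n X k. postc k \<phi> u = w"
proof -
  let ?u = "\<lambda>x. if length x = k then e' (\<theta> x) else undefined"
  have u: "?u \<in> skcubes n X k" using boxmor_precomp_skcubes assms(3,4) e'(1) .
  have "postc k \<phi> ?u = w"
    by (rule cubes_eqI[OF postc_cubes[OF skcubes_cubes[OF u] assms(1)] skcubes_cubes[OF w]])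
      (use assms boxmor_length in \<open>auto simp: postc_def\<close>)
  with u show ?thesis by blast
qed

locale skeletal_pushout_criterion =
  fixes n :: nat and A :: "'a graph" and B :: "'b graph" and C :: "'c graph" and D :: "'d graph"
    and a :: "'a \<Rightarrow> 'b" and b :: "'a \<Rightarrow> 'c" and c :: "'b \<Rightarrow> 'd" and d :: "'c \<Rightarrow> 'd"
  assumes a_map: "graph_map A B a" and b_map: "graph_map A C b"
    and c_map: "graph_map B D c" and d_map: "graph_map C D d"
    and commutes: "\<And>x. x \<in> verts A \<Longrightarrow> c (a x) = d (b x)"
    and inj_c: "inj_on c (verts B)" and inj_d: "inj_on d (verts C)"
    and pullback_verts: "\<And>z w. z \<in> verts B \<Longrightarrow> w \<in> verts C \<Longrightarrow> c z = d w \<Longrightarrow>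
        \<exists>x\<in>verts A. a x = z \<and> b x = w"
    and pullback_edges: "\<And>x1 x2. x1 \<in> verts A \<Longrightarrow> x2 \<in> verts A \<Longrightarrow>
        edge B (a x1) (a x2) \<Longrightarrow> edge C (b x1) (b x2) \<Longrightarrow> edge A x1 x2"
    and cubes_lift: "\<And>m e. m \<le> n \<Longrightarrow> e \<in> cubes D m \<Longrightarrow>
        (\<exists>e'\<in>cubes B m. \<forall>x. length x = m \<longrightarrow> c (e' x) = e x)
      \<or> (\<exists>e'\<in>cubes C m. \<forall>x. length x = m \<longrightarrow> d (e' x) = e x)"
begin

lemma pullback_cube:
  assumes u: "u \<in> cubes B m" and v: "v \<in> cubes C m" and eq: "\<And>x. length x = m \<Longrightarrow> c (u x) = d (v x)"
  shows "\<exists>w\<in>cubes A m. \<forall>x. length x = m \<longrightarrow> a (w x) = u x \<and> b (w x) = v x"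
proof -
  define w where "w x = (if length x = m then (SOME x0. x0 \<in> verts A \<and> a x0 = u x \<and> b x0 = v x)
                         else undefined)" for x
  have w: "w x \<in> verts A \<and> a (w x) = u x \<and> b (w x) = v x" if "length x = m" for x
  proof -
    have "\<exists>x0. x0 \<in> verts A \<and> a x0 = u x \<and> b x0 = v x"
      using pullback_verts[OF cubes_vert[OF u that] cubes_vert[OF v that] eq[OF that]] by blast
    from someI_ex[OF this] show ?thesis using that by (simp add: w_def)
  qed
  have "w \<in> cubes A m"
  proof (rule cubesI)
    fix x y assume xy: "edge (cube_graph m) x y"
    then show "edge A (w x) (w y)"
      using pullback_edges w cubes_edge[OF u xy] cubes_edge[OF v xy] cube_graph_edge_length by metis
  qed (use w in \<open>auto simp: w_def\<close>)
  with w show ?thesis by blast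
qed

text \<open>The m-cube e presenting u1 = e \<circ> \<theta> need not lift to A, but its restriction along a
  section s of \<theta> over the image of \<theta> does.\<close>

lemma matching_cubes_factor_through_A:
  assumes u1: "u1 \<in> skcubes n B k" and v1: "v1 \<in> cubes C k"
    and cd: "\<And>x. length x = k \<Longrightarrow> c (u1 x) = d (v1 x)"
  shows "\<exists>m \<theta> w. m \<le> n \<and> boxmor k m \<theta> \<and> w \<in> cubes A m
           \<and> (\<forall>x. length x = k \<longrightarrow> a (w (\<theta> x)) = u1 x \<and> b (w (\<theta> x)) = v1 x)"
proof -
  obtain m \<theta> e where m: "m \<le> n" and \<theta>: "boxmor k m \<theta>" and e: "e \<in> cubes B m"
    and u1_eq: "\<forall>x. length x = k \<longrightarrow> u1 x = e (\<theta> x)"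
    using u1 unfolding skcubes_def by blast
  obtain s where s_len: "\<And>x. length x = m \<Longrightarrow> length (s x) = k"
    and s_edge: "\<And>x y. edge (cube_graph m) x y \<Longrightarrow> edge (cube_graph k) (s x) (s y)"
    and \<theta>s\<theta>: "\<And>x. length x = k \<Longrightarrow> \<theta> (s (\<theta> x)) = \<theta> x"
    using boxmor_regular[OF \<theta>] by blast
  have u1c: "u1 \<in> cubes B k" using u1 by (rule skcubes_cubes)
  let ?us = "\<lambda>x. if length x = m then u1 (s x) else undefined"
  let ?vs = "\<lambda>x. if length x = m then v1 (s x) else undefined"
  have "?us \<in> cubes B m" "?vs \<in> cubes C m"
    using s_len s_edge cube_graph_edge_length cubes_vert[OF u1c] cubes_vert[OF v1]
      cubes_edge[OF u1c] cubes_edge[OF v1]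
    by (auto intro!: cubesI)
  moreover have "c (?us x) = d (?vs x)" if "length x = m" for x
    using cd s_len that by simp
  ultimately obtain w where w: "w \<in> cubes A m"
    and w_ab: "\<forall>x. length x = m \<longrightarrow> a (w x) = ?us x \<and> b (w x) = ?vs x"
    using pullback_cube by blast
  have "a (w (\<theta> x)) = u1 x \<and> b (w (\<theta> x)) = v1 x" if x: "length x = k" for x
  proof -
    have len: "length (\<theta> x) = m" "length (s (\<theta> x)) = k" using boxmor_length[OF \<theta> x] s_len by auto
    have "u1 (s (\<theta> x)) = u1 x" using u1_eq \<theta>s\<theta> x len by simp
    moreover have "d (v1 (s (\<theta> x))) = d (v1 x)" using cd x len calculation by metis
    then have "v1 (s (\<theta> x)) = v1 x" using inj_onD[OF inj_d] cubes_vert[OF v1] x len by metis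
    ultimately show ?thesis using w_ab len by simp
  qed
  with m \<theta> w show ?thesis by blast
qed

lemma skcubes_pullback:
  assumes u1: "u1 \<in> skcubes n B k" and v1: "v1 \<in> skcubes n C k" and eq: "postc k c u1 = postc k d v1"
  shows "\<exists>u0\<in>skcubes n A k. postc k a u0 = u1 \<and> postc k b u0 = v1"
proof -
  have "c (u1 x) = d (v1 x)" if "length x = k" for x
    using fun_cong[OF eq, of x] that by (simp add: postc_def)
  then obtain m \<theta> w where "m \<le> n" "boxmor k m \<theta>" "w \<in> cubes A m"
    and w: "\<forall>x. length x = k \<longrightarrow> a (w (\<theta> x)) = u1 x \<and> b (w (\<theta> x)) = v1 x"
    using matching_cubes_factor_through_A[OF u1 skcubes_cubes[OF v1]] by blast
  then have u0: "(\<lambda>x. if length x = k then w (\<theta> x) else undefined) \<in> skcubes n A k"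
    by (intro boxmor_precomp_skcubes)
  have "postc k a (\<lambda>x. if length x = k then w (\<theta> x) else undefined) = u1"
    by (rule cubes_eqI[OF postc_cubes[OF skcubes_cubes[OF u0] a_map] skcubes_cubes[OF u1]])
      (simp add: postc_def w)
  moreover have "postc k b (\<lambda>x. if length x = k then w (\<theta> x) else undefined) = v1"
    by (rule cubes_eqI[OF postc_cubes[OF skcubes_cubes[OF u0] b_map] skcubes_cubes[OF v1]])
      (simp add: postc_def w)
  ultimately show ?thesis using u0 by blast
qed

lemma skcubes_D_covered:
  assumes w: "w \<in> skcubes n D k"
  shows "\<exists>u\<in>skcubes n B k <+> skcubes n C k. case_sum (postc k c) (postc k d) u = w"
proof -
  obtain m \<theta> e where me: "m \<le> n" "boxmor k m \<theta>" "e \<in> cubes D m" "\<forall>x. length x = k \<longrightarrow> w x = e (\<theta> x)"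
    using w unfolding skcubes_def by blast
  from cubes_lift[OF me(1,3)] show ?thesis
  proof (elim disjE bexE)
    fix e' assume "e' \<in> cubes B m" "\<forall>x. length x = m \<longrightarrow> c (e' x) = e x"
    then obtain u where "u \<in> skcubes n B k" "postc k c u = w" using skcube_lift[OF c_map w me(1,2,4)] by blast
    then show ?thesis by force
  next
    fix e' assume "e' \<in> cubes C m" "\<forall>x. length x = m \<longrightarrow> d (e' x) = e x"
    then obtain u where "u \<in> skcubes n C k" "postc k d u = w" using skcube_lift[OF d_map w me(1,2,4)] by blast
    then show ?thesis by force
  qed
qed

lemma skcubes_same_image:
  assumes "u \<in> skcubes n B k <+> skcubes n C k" "v \<in> skcubes n B k <+> skcubes n C k"
    and eq: "case_sum (postc k c) (postc k d) u = case_sum (postc k c) (postc k d) v"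
  shows "u = v \<or> (\<exists>x\<in>skcubes n A k. (u, v) = (Inl (postc k a x), Inr (postc k b x))
                                     \<or> (v, u) = (Inl (postc k a x), Inr (postc k b x)))"
  using assms(1,2)
proof (elim PlusE)
  fix u1 v1 assume "u = Inl u1" "u1 \<in> skcubes n B k" "v = Inl v1" "v1 \<in> skcubes n B k"
  then show ?thesis using eq postc_inj[OF inj_c skcubes_cubes skcubes_cubes] by auto
next
  fix u1 v1 assume "u = Inl u1" "u1 \<in> skcubes n B k" "v = Inr v1" "v1 \<in> skcubes n C k"
  then show ?thesis using eq skcubes_pullback[of u1 k v1] by auto
next
  fix u1 v1 assume "u = Inr u1" "u1 \<in> skcubes n C k" "v = Inl v1" "v1 \<in> skcubes n B k"
  then show ?thesis using eq skcubes_pullback[of v1 k u1] by auto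
next
  fix u1 v1 assume "u = Inr u1" "u1 \<in> skcubes n C k" "v = Inr v1" "v1 \<in> skcubes n C k"
  then show ?thesis using eq postc_inj[OF inj_d skcubes_cubes skcubes_cubes] by auto
qed

theorem skel_pushout: "skel_pushout n A B C D a b c d"
  unfolding skel_pushout_def pushout_set_def
proof (intro allI conjI ballI impI)
  fix k x assume x: "x \<in> skcubes n A k"
  show "postc k a x \<in> skcubes n B k" "postc k b x \<in> skcubes n C k"
    using postc_skcubes x a_map b_map by blast+
  show "postc k c (postc k a x) = postc k d (postc k b x)"
    using commutes cubes_vert[OF skcubes_cubes[OF x]] by (auto simp: postc_def)
next
  fix k y assume "y \<in> skcubes n B k"
  then show "postc k c y \<in> skcubes n D k" using postc_skcubes c_map by blast
next
  fix k z assume "z \<in> skcubes n C k"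
  then show "postc k d z \<in> skcubes n D k" using postc_skcubes d_map by blast
next
  fix k w assume "w \<in> skcubes n D k"
  then show "\<exists>u\<in>skcubes n B k <+> skcubes n C k. case_sum (postc k c) (postc k d) u = w"
    by (rule skcubes_D_covered)
next
  fix k u v
  let ?R = "{(Inl (postc k a x), Inr (postc k b x)) | x. x \<in> skcubes n A k}"
  assume "u \<in> skcubes n B k <+> skcubes n C k" "v \<in> skcubes n B k <+> skcubes n C k"
    "case_sum (postc k c) (postc k d) u = case_sum (postc k c) (postc k d) v"
  then have "u = v \<or> (u, v) \<in> ?R \<or> (v, u) \<in> ?R" using skcubes_same_image by blast
  then show "(u, v) \<in> (?R \<union> ?R\<inverse>)\<^sup>*" by blast
qed

end

section \<open>Quotient graphs described by normal forms\<close>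

definition key_class :: "'a set \<Rightarrow> ('a \<Rightarrow> 'b) \<Rightarrow> 'a \<Rightarrow> 'a set" where
  "key_class V \<kappa> x = {y \<in> V. \<kappa> y = \<kappa> x}"

definition gen_eqv_kernel :: "'a set \<Rightarrow> ('a \<times> 'a) set \<Rightarrow> ('a \<Rightarrow> 'b) \<Rightarrow> bool" where
  "gen_eqv_kernel V R \<kappa> \<longleftrightarrow> (\<forall>x\<in>V. \<forall>y\<in>V. (x, y) \<in> gen_eqv V R \<longleftrightarrow> \<kappa> x = \<kappa> y)"

lemma gen_eqv_kernelI:
  assumes invariant: "\<And>x y. (x, y) \<in> R \<Longrightarrow> \<kappa> x = \<kappa> y"
    and reach: "\<And>x. x \<in> V \<Longrightarrow> (x, \<kappa> x) \<in> R\<^sup>= \<or> (\<exists>y. (y, x) \<in> R \<and> (y, \<kappa> x) \<in> R)"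
  shows "gen_eqv_kernel V R \<kappa>"
  unfolding gen_eqv_kernel_def gen_eqv_def
proof (intro ballI iffI)
  fix x y assume "(x, y) \<in> (R \<union> R\<inverse>)\<^sup>* \<inter> V \<times> V"
  then have "(x, y) \<in> (R \<union> R\<inverse>)\<^sup>*" by simp
  then show "\<kappa> x = \<kappa> y" by (induction rule: rtrancl_induct) (auto dest: invariant)
next
  fix x y assume x: "x \<in> V" and y: "y \<in> V" and eq: "\<kappa> x = \<kappa> y"
  have to_key: "(u, \<kappa> u) \<in> (R \<union> R\<inverse>)\<^sup>*" if "u \<in> V" for u
  proof -
    from reach[OF that] consider "(u, \<kappa> u) \<in> R" | "\<kappa> u = u" | z where "(z, u) \<in> R" "(z, \<kappa> u) \<in> R"
      by auto
    then show ?thesis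
    proof cases
      case 3
      then have "(u, z) \<in> (R \<union> R\<inverse>)\<^sup>*" "(z, \<kappa> u) \<in> (R \<union> R\<inverse>)\<^sup>*" by auto
      then show ?thesis by (rule rtrancl_trans)
    qed auto
  qed
  have "(\<kappa> y, y) \<in> ((R \<union> R\<inverse>)\<inverse>)\<^sup>*" using rtrancl_converseI[OF to_key[OF y]] .
  moreover have "(R \<union> R\<inverse>)\<inverse> = R \<union> R\<inverse>" by auto
  ultimately have "(\<kappa> x, y) \<in> (R \<union> R\<inverse>)\<^sup>*" using eq by simp
  with to_key[OF x] have "(x, y) \<in> (R \<union> R\<inverse>)\<^sup>*" by (rule rtrancl_trans)
  with x y show "(x, y) \<in> (R \<union> R\<inverse>)\<^sup>* \<inter> V \<times> V" by simp
qed

context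
  fixes V R and \<kappa> :: "'a \<Rightarrow> 'b"
  assumes kernel: "gen_eqv_kernel V R \<kappa>"
begin

lemma gen_eqv_class: "x \<in> V \<Longrightarrow> gen_eqv V R `` {x} = key_class V \<kappa> x"
  using kernel unfolding gen_eqv_kernel_def key_class_def gen_eqv_def by auto

lemma gen_eqv_quotient: "V // gen_eqv V R = key_class V \<kappa> ` V"
  unfolding quotient_def using gen_eqv_class by fastforce

end

lemma mem_key_class_iff: "y \<in> key_class V \<kappa> x \<longleftrightarrow> y \<in> V \<and> \<kappa> y = \<kappa> x"
  by (simp add: key_class_def)

lemma key_class_self: "x \<in> V \<Longrightarrow> x \<in> key_class V \<kappa> x"
  by (simp add: key_class_def)

lemma key_class_eq_iff:
  assumes "x \<in> V" shows "key_class V \<kappa> x = key_class V \<kappa> y \<longleftrightarrow> \<kappa> x = \<kappa> y"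
proof
  assume "key_class V \<kappa> x = key_class V \<kappa> y"
  with key_class_self[OF assms, of \<kappa>] have "x \<in> key_class V \<kappa> y" by simp
  then show "\<kappa> x = \<kappa> y" by (simp add: key_class_def)
qed (simp add: key_class_def)

lemma key_class_of_member: "y \<in> key_class V \<kappa> x \<Longrightarrow> key_class V \<kappa> y = key_class V \<kappa> x \<and> y \<in> V"
  by (auto simp: key_class_def)

lemma some_in_key_class: "x \<in> V \<Longrightarrow> (SOME y. y \<in> key_class V \<kappa> x) \<in> key_class V \<kappa> x"
  using someI[of "\<lambda>y. y \<in> key_class V \<kappa> x" x] by (simp add: key_class_def)

lemma quot_graph_verts:
  "gen_eqv_kernel (verts U) R \<kappa> \<Longrightarrow> verts (quot_graph U R) = key_class (verts U) \<kappa> ` verts U"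
  by (simp add: quot_graph_def gen_eqv_quotient)

lemma quot_graph_edge:
  "gen_eqv_kernel (verts U) R \<kappa> \<Longrightarrow> edge (quot_graph U R) X Y \<longleftrightarrow>
    X \<in> key_class (verts U) \<kappa> ` verts U \<and> Y \<in> key_class (verts U) \<kappa> ` verts U \<and> (\<exists>x\<in>X. \<exists>y\<in>Y. edge U x y)"
  by (simp add: quot_graph_def gen_eqv_quotient)

lemma quot_graph_map:
  assumes kernel: "gen_eqv_kernel (verts U) R \<kappa>" and kernel': "gen_eqv_kernel (verts U') R' \<kappa>'"
    and vert: "\<And>x. x \<in> verts U \<Longrightarrow> \<phi> x \<in> verts U'"
    and edge: "\<And>x y. edge U x y \<Longrightarrow> edge U' (\<phi> x) (\<phi> y)"
    and F: "\<And>x. x \<in> verts U \<Longrightarrow> F (key_class (verts U) \<kappa> x) = key_class (verts U') \<kappa>' (\<phi> x)"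
  shows "graph_map (quot_graph U R) (quot_graph U' R') F"
  unfolding graph_map_def quot_graph_verts[OF kernel] quot_graph_verts[OF kernel']
proof (intro conjI ballI allI impI)
  fix X assume "X \<in> key_class (verts U) \<kappa> ` verts U"
  then show "F X \<in> key_class (verts U') \<kappa>' ` verts U'" using F vert by auto
next
  fix X Y assume "edge (quot_graph U R) X Y"
  then obtain x0 y0 x y where "X = key_class (verts U) \<kappa> x0" "Y = key_class (verts U) \<kappa> y0"
    and "x \<in> X" "y \<in> Y" and xy: "edge U x y"
    unfolding quot_graph_edge[OF kernel] by blast
  then have x: "x \<in> verts U" "X = key_class (verts U) \<kappa> x"
    and y: "y \<in> verts U" "Y = key_class (verts U) \<kappa> y"
    using key_class_of_member by metis+
  have "\<phi> x \<in> F X" "\<phi> y \<in> F Y" using x y F vert by (simp_all add: key_class_def)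
  moreover have "F X \<in> key_class (verts U') \<kappa>' ` verts U'" "F Y \<in> key_class (verts U') \<kappa>' ` verts U'"
    using x y F vert by simp_all
  ultimately show "edge (quot_graph U' R') (F X) (F Y)"
    unfolding quot_graph_edge[OF kernel'] using edge[OF xy] by blast
qed

lemma quot_graph_map_inj:
  assumes kernel: "gen_eqv_kernel (verts U) R \<kappa>"
    and vert: "\<And>x. x \<in> verts U \<Longrightarrow> \<phi> x \<in> verts U'"
    and reflect: "\<And>x y. x \<in> verts U \<Longrightarrow> y \<in> verts U \<Longrightarrow> \<kappa>' (\<phi> x) = \<kappa>' (\<phi> y) \<Longrightarrow> \<kappa> x = \<kappa> y"
    and F: "\<And>x. x \<in> verts U \<Longrightarrow> F (key_class (verts U) \<kappa> x) = key_class (verts U') \<kappa>' (\<phi> x)"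
  shows "inj_on F (verts (quot_graph U R))"
proof (rule inj_onI)
  fix X Y assume "X \<in> verts (quot_graph U R)" "Y \<in> verts (quot_graph U R)" "F X = F Y"
  then obtain x y where x: "x \<in> verts U" "X = key_class (verts U) \<kappa> x"
    and y: "y \<in> verts U" "Y = key_class (verts U) \<kappa> y"
    and eq: "key_class (verts U') \<kappa>' (\<phi> x) = key_class (verts U') \<kappa>' (\<phi> y)"
    unfolding quot_graph_verts[OF kernel] using F by auto
  have "\<kappa>' (\<phi> x) = \<kappa>' (\<phi> y)" using key_class_eq_iff[OF vert[OF x(1)], of \<kappa>' "\<phi> y"] eq by blast
  then have "\<kappa> x = \<kappa> y" using reflect x(1) y(1) by blast
  then show "X = Y" using key_class_eq_iff[OF x(1), of \<kappa> y] x(2) y(2) by blast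
qed

lemma cyl_vertex_cases:
  obtains (H) h where "x = Inl h" | (mid) v t where "x = Inr (Inl (v, t))" | (K) k where "x = Inr (Inr k)"
  by (metis obj_sumE surj_pair)

lemma cyl_pre_verts [simp]:
  "Inl h \<in> verts (cyl_pre G H K m) \<longleftrightarrow> h \<in> verts H"
  "Inr (Inl (v, t)) \<in> verts (cyl_pre G H K m) \<longleftrightarrow> v \<in> verts G \<and> t \<le> m"
  "Inr (Inr k) \<in> verts (cyl_pre G H K m) \<longleftrightarrow> k \<in> verts K"
  by (auto simp: cyl_pre_def box_def interval_def)

lemma cyl_pre_edge [simp]:
  "edge (cyl_pre G H K m) (Inl h) (Inl h') = edge H h h'"
  "edge (cyl_pre G H K m) (Inr (Inl (v, t))) (Inr (Inl (v', t'))) =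
     ((v = v' \<and> v \<in> verts G \<and> t \<le> m \<and> t' \<le> m \<and> (t = t' \<or> t = Suc t' \<or> t' = Suc t))
      \<or> (edge G v v' \<and> t = t' \<and> t \<le> m))"
  "edge (cyl_pre G H K m) (Inr (Inr k)) (Inr (Inr k')) = edge K k k'"
  "edge (cyl_pre G H K m) (Inl h) (Inr r) = False"
  "edge (cyl_pre G H K m) (Inr r) (Inl h) = False"
  "edge (cyl_pre G H K m) (Inr (Inl vt)) (Inr (Inr k)) = False"
  "edge (cyl_pre G H K m) (Inr (Inr k)) (Inr (Inl vt)) = False"
  by (auto simp: cyl_pre_def box_def interval_def split: sum.splits)

lemma cyl_pre_edge_verts:
  assumes "is_graph G" "is_graph H" "is_graph K" "edge (cyl_pre G H K m) x y"
  shows "x \<in> verts (cyl_pre G H K m) \<and> y \<in> verts (cyl_pre G H K m)"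
  using assms by (cases x rule: cyl_vertex_cases; cases y rule: cyl_vertex_cases) (auto simp: is_graph_def)

lemma cyl_pre_refl:
  assumes "is_graph G" "is_graph H" "is_graph K" "x \<in> verts (cyl_pre G H K m)"
  shows "edge (cyl_pre G H K m) x x"
  using assms by (cases x rule: cyl_vertex_cases) (auto simp: is_graph_def)

lemma cyl_rel_iff:
  "(x, y) \<in> cyl_rel G f g m \<longleftrightarrow>
     (\<exists>v\<in>verts G. (x = Inr (Inl (v, 0)) \<and> y = Inl (f v)) \<or> (x = Inr (Inl (v, m)) \<and> y = Inr (Inr (g v))))"
  by (auto simp: cyl_rel_def)

text \<open>Normal forms of the vertices of Cyl_m(f,g): the ends of the cylinder are replaced by
  their images in H and K. This is well defined if m \<ge> 1 or if one of f, g is the identity.\<close>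

definition cyl_key :: "nat \<Rightarrow> ('g \<Rightarrow> 'h) \<Rightarrow> ('g \<Rightarrow> 'k) \<Rightarrow> 'h + ('g \<times> nat) + 'k \<Rightarrow> 'h + ('g \<times> nat) + 'k" where
  "cyl_key m f g x = (case x of Inl h \<Rightarrow> Inl h
     | Inr (Inl (v, t)) \<Rightarrow> if t = 0 then Inl (f v) else if t = m then Inr (Inr (g v)) else Inr (Inl (v, t))
     | Inr (Inr k) \<Rightarrow> Inr (Inr k))"

definition cyl_key_id_right :: "nat \<Rightarrow> ('g \<Rightarrow> 'h) \<Rightarrow> 'h + ('g \<times> nat) + 'g \<Rightarrow> 'h + ('g \<times> nat) + 'g" where
  "cyl_key_id_right m f x = (case x of Inl h \<Rightarrow> Inl h
     | Inr (Inl (v, t)) \<Rightarrow> if t = 0 then Inl (f v) else if t = m then Inr (Inr v) else Inr (Inl (v, t))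
     | Inr (Inr v) \<Rightarrow> if m = 0 then Inl (f v) else Inr (Inr v))"

definition cyl_key_id_left :: "nat \<Rightarrow> ('g \<Rightarrow> 'k) \<Rightarrow> 'g + ('g \<times> nat) + 'k \<Rightarrow> 'g + ('g \<times> nat) + 'k" where
  "cyl_key_id_left m g x = (case x of Inl v \<Rightarrow> if m = 0 then Inr (Inr (g v)) else Inl v
     | Inr (Inl (v, t)) \<Rightarrow> if t = m then Inr (Inr (g v)) else if t = 0 then Inl v else Inr (Inl (v, t))
     | Inr (Inr k) \<Rightarrow> Inr (Inr k))"

lemma cyl_key_kernel:
  assumes "1 \<le> m"
  shows "gen_eqv_kernel (verts (cyl_pre G H K m)) (cyl_rel G f g m) (cyl_key m f g)"
proof (rule gen_eqv_kernelI)
  fix x y assume "(x, y) \<in> cyl_rel G f g m"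
  then show "cyl_key m f g x = cyl_key m f g y" using assms by (auto simp: cyl_rel_iff cyl_key_def)
next
  fix x assume "x \<in> verts (cyl_pre G H K m)"
  then have "(x, cyl_key m f g x) \<in> (cyl_rel G f g m)\<^sup>="
    using assms by (cases x rule: cyl_vertex_cases) (simp_all add: cyl_rel_iff cyl_key_def)
  then show "(x, cyl_key m f g x) \<in> (cyl_rel G f g m)\<^sup>= \<or> (\<exists>y. (y, x) \<in> cyl_rel G f g m \<and> (y, cyl_key m f g x) \<in> cyl_rel G f g m)" ..
qed

lemma cyl_key_id_right_kernel:
  "gen_eqv_kernel (verts (cyl_pre G H G m)) (cyl_rel G f id m) (cyl_key_id_right m f)"
proof (rule gen_eqv_kernelI)
  fix x y assume "(x, y) \<in> cyl_rel G f id m"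
  then show "cyl_key_id_right m f x = cyl_key_id_right m f y" by (auto simp: cyl_rel_iff cyl_key_id_right_def)
next
  fix x assume x: "x \<in> verts (cyl_pre G H G m)"
  show "(x, cyl_key_id_right m f x) \<in> (cyl_rel G f id m)\<^sup>= \<or>
    (\<exists>y. (y, x) \<in> cyl_rel G f id m \<and> (y, cyl_key_id_right m f x) \<in> cyl_rel G f id m)"
  proof (cases x rule: cyl_vertex_cases)
    case (K v)
    show ?thesis
    proof (cases "m = 0")
      case True
      then show ?thesis using x K
        by (intro disjI2 exI[of _ "Inr (Inl (v, 0))"]) (simp add: cyl_rel_iff cyl_key_id_right_def)
    qed (use K in \<open>simp add: cyl_key_id_right_def\<close>)
  qed (use x in \<open>simp_all add: cyl_rel_iff cyl_key_id_right_def\<close>)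
qed

lemma cyl_key_id_left_kernel:
  "gen_eqv_kernel (verts (cyl_pre G G K m)) (cyl_rel G id g m) (cyl_key_id_left m g)"
proof (rule gen_eqv_kernelI)
  fix x y assume "(x, y) \<in> cyl_rel G id g m"
  then show "cyl_key_id_left m g x = cyl_key_id_left m g y" by (auto simp: cyl_rel_iff cyl_key_id_left_def)
next
  fix x assume x: "x \<in> verts (cyl_pre G G K m)"
  show "(x, cyl_key_id_left m g x) \<in> (cyl_rel G id g m)\<^sup>= \<or>
    (\<exists>y. (y, x) \<in> cyl_rel G id g m \<and> (y, cyl_key_id_left m g x) \<in> cyl_rel G id g m)"
  proof (cases x rule: cyl_vertex_cases)
    case (H v)
    show ?thesis
    proof (cases "m = 0")
      case True
      then show ?thesis using x H
        by (intro disjI2 exI[of _ "Inr (Inl (v, 0))"]) (simp add: cyl_rel_iff cyl_key_id_left_def)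
    qed (use H in \<open>simp add: cyl_key_id_left_def\<close>)
  qed (use x in \<open>simp_all add: cyl_rel_iff cyl_key_id_left_def\<close>)
qed

lemma cyl_id_id_class:
  assumes "v \<in> verts G" "t \<le> p" "y \<in> cyl_cls G G G id id p (Inr (Inl (v, t)))"
  shows "y = Inr (Inl (v, t)) \<or> (y = Inl v \<and> t = 0) \<or> (y = Inr (Inr v) \<and> t = p)"
proof -
  have "cyl_cls G G G id id p (Inr (Inl (v, t)))
      = key_class (verts (cyl_pre G G G p)) (cyl_key_id_right p id) (Inr (Inl (v, t)))"
    unfolding cyl_cls_def using assms(1,2) by (intro gen_eqv_class[OF cyl_key_id_right_kernel]) simp
  then have "y \<in> key_class (verts (cyl_pre G G G p)) (cyl_key_id_right p id) (Inr (Inl (v, t)))"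
    using assms(3) by simp
  then show ?thesis
    by (cases y rule: cyl_vertex_cases) (auto simp: mem_key_class_iff cyl_key_id_right_def split: if_splits)
qed

lemma cyl_id_id_class_self:
  "v \<in> verts G \<Longrightarrow> t \<le> p \<Longrightarrow> Inr (Inl (v, t)) \<in> cyl_cls G G G id id p (Inr (Inl (v, t)))"
  by (simp add: cyl_cls_def gen_eqv_def)

section \<open>Lipschitz functions on cubes\<close>

definition hamming :: "bool list \<Rightarrow> bool list \<Rightarrow> nat" where
  "hamming x y = card {i. i < length x \<and> x!i \<noteq> y!i}"

lemma hamming_le_length: "hamming x y \<le> length x"
proof -
  have "{i. i < length x \<and> x!i \<noteq> y!i} \<subseteq> {..<length x}" by auto
  then show ?thesis unfolding hamming_def by (metis card_lessThan card_mono finite_lessThan)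
qed

lemma hamming_commute: "length x = length y \<Longrightarrow> hamming x y = hamming y x"
  unfolding hamming_def by metis

lemma hamming_less_length:
  assumes "i < length x" "x!i = y!i"
  shows "hamming x y < length x"
proof -
  have "{j. j < length x \<and> x!j \<noteq> y!j} \<subseteq> {..<length x} - {i}" using assms by auto
  then have "hamming x y \<le> card ({..<length x} - {i})" unfolding hamming_def by (intro card_mono) auto
  also have "\<dots> < length x" using assms(1) by simp
  finally show ?thesis .
qed

lemma hamming_eq_0: "length x = length y \<Longrightarrow> hamming x y = 0 \<Longrightarrow> x = y"
  unfolding hamming_def by (auto intro!: nth_equalityI)

lemma cube_neighbour_of_antipode:
  assumes "hamming x0 y = m" "length x0 = m" "edge (cube_graph m) y y'" "y' \<noteq> y"
  shows "hamming x0 y' < m"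
proof -
  have len: "length y = m" "length y' = m" using assms(3) cube_graph_edge_length by auto
  have "\<exists>i<m. y'!i \<noteq> y!i"
  proof (rule ccontr)
    assume "\<not> (\<exists>i<m. y'!i \<noteq> y!i)"
    then have "y' = y" using len by (auto intro!: nth_equalityI)
    with assms(4) show False by simp
  qed
  then obtain i where i: "i < m" "y'!i \<noteq> y!i" by blast
  have "x0!i \<noteq> y!i" using hamming_less_length[of i x0 y] assms(1,2) i by fastforce
  then have "x0!i = y'!i" using i by auto
  then show ?thesis using hamming_less_length[of i x0 y'] assms(2) i by simp
qed

context
  fixes m :: nat and \<phi> :: "bool list \<Rightarrow> nat"
  assumes lipschitz: "\<And>x y. edge (cube_graph m) x y \<Longrightarrow> \<phi> x \<le> \<phi> y + 1"
begin

lemma lipschitz_hamming: "length x = m \<Longrightarrow> length y = m \<Longrightarrow> \<phi> x \<le> \<phi> y + hamming x y"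
proof (induction "hamming x y" arbitrary: x)
  case 0
  then show ?case using hamming_eq_0[of x y] by simp
next
  case (Suc k)
  then have "{i. i < length x \<and> x!i \<noteq> y!i} \<noteq> {}" unfolding hamming_def by (metis card.empty nat.distinct(1))
  then obtain i where i: "i < length x" "x!i \<noteq> y!i" by auto
  define x' where "x' = x[i := y!i]"
  have "{j. j < length x' \<and> x'!j \<noteq> y!j} = {j. j < length x \<and> x!j \<noteq> y!j} - {i}"
    using i by (auto simp: x'_def nth_list_update)
  then have "hamming x' y = k" using Suc(2) i unfolding hamming_def by (simp add: card_Diff_singleton)
  moreover have "length x' = m" using Suc by (simp add: x'_def)
  ultimately have "\<phi> x' \<le> \<phi> y + k" using Suc by metis
  moreover have "edge (cube_graph m) x x'"
    using Suc(3) i cube_graph_edge_flip[of x m i] by (simp add: x'_def)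
  ultimately show ?case using lipschitz Suc(2) by fastforce
qed

lemma lipschitz_spread: "length x = m \<Longrightarrow> length y = m \<Longrightarrow> \<phi> x \<le> \<phi> y + m"
  using lipschitz_hamming hamming_le_length[of x y] by fastforce

lemma lipschitz_strict_max:
  assumes "length y = m" "length x0 = m" "\<phi> x0 + m \<le> \<phi> y" "edge (cube_graph m) y y'" "y' \<noteq> y"
  shows "\<phi> y' < \<phi> y"
proof -
  have "hamming y x0 = m"
    using lipschitz_hamming[OF assms(1,2)] hamming_le_length[of y x0] assms(1,3) by simp
  then have "hamming x0 y' < m"
    using cube_neighbour_of_antipode assms hamming_commute by metis
  moreover have "\<phi> y' \<le> \<phi> x0 + hamming y' x0"
    using lipschitz_hamming assms(2,4) cube_graph_edge_length by blast
  ultimately show ?thesis using assms(2,3,4) hamming_commute cube_graph_edge_length by fastforce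
qed

lemma lipschitz_strict_min:
  assumes "length y = m" "length x1 = m" "\<phi> y + m \<le> \<phi> x1" "edge (cube_graph m) y y'" "y' \<noteq> y"
  shows "\<phi> y < \<phi> y'"
proof -
  have "hamming x1 y = m"
    using lipschitz_hamming[OF assms(2,1)] hamming_le_length[of x1 y] assms(2,3) by simp
  then have "hamming x1 y' < m" using cube_neighbour_of_antipode assms by metis
  moreover have "\<phi> x1 \<le> \<phi> y' + hamming x1 y'"
    using lipschitz_hamming assms(2,4) cube_graph_edge_length by blast
  ultimately show ?thesis using assms(3) by linarith
qed

end

section \<open>The square of cylinders\<close>

locale cylinder_square =
  fixes G :: "'g graph" and H :: "'h graph" and K :: "'k graph"
    and f :: "'g \<Rightarrow> 'h" and g :: "'g \<Rightarrow> 'k" and p q1 q2 :: nat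
  assumes graph_G: "is_graph G" and graph_H: "is_graph H" and graph_K: "is_graph K"
    and f_map: "graph_map G H f" and g_map: "graph_map G K g"
    and q1_or_inj_f: "1 \<le> q1 \<or> inj_on f (verts G)"
    and q2_or_inj_g: "1 \<le> q2 \<or> inj_on g (verts G)"
    and q1_or_q2: "1 \<le> q1 \<or> 1 \<le> q2"
begin

abbreviation "mB \<equiv> p + q1"
abbreviation "mC \<equiv> p + q2"
abbreviation "M \<equiv> p + q1 + q2"
abbreviation "PB \<equiv> cyl_pre G H G mB"
abbreviation "PC \<equiv> cyl_pre G G K mC"
abbreviation "PD \<equiv> cyl_pre G H K M"
abbreviation "VB \<equiv> verts PB"
abbreviation "VC \<equiv> verts PC"
abbreviation "VD \<equiv> verts PD"
abbreviation "\<kappa>B \<equiv> cyl_key_id_right mB f"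
abbreviation "\<kappa>C \<equiv> cyl_key_id_left mC g"
abbreviation "\<kappa>D \<equiv> cyl_key M f g"
abbreviation "clB \<equiv> key_class VB \<kappa>B"
abbreviation "clC \<equiv> key_class VC \<kappa>C"
abbreviation "clD \<equiv> key_class VD \<kappa>D"
abbreviation "A \<equiv> box G (interval p)"
abbreviation "B \<equiv> cyl G H G f id mB"
abbreviation "C \<equiv> cyl G G K id g mC"
abbreviation "D \<equiv> cyl G H K f g M"
abbreviation "a \<equiv> rmap G H G f id p mB \<circ> cyl_incl G p"
abbreviation "b \<equiv> lmap G G K id g p mC \<circ> cyl_incl G p"
abbreviation "c \<equiv> lmap G H K f g mB M"
abbreviation "d \<equiv> rmap G H K f g mC M"

lemma M_pos: "1 \<le> M"
  using q1_or_q2 by auto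

lemma kernel_B: "gen_eqv_kernel VB (cyl_rel G f id mB) \<kappa>B"
  by (rule cyl_key_id_right_kernel)

lemma kernel_C: "gen_eqv_kernel VC (cyl_rel G id g mC) \<kappa>C"
  by (rule cyl_key_id_left_kernel)

lemma kernel_D: "gen_eqv_kernel VD (cyl_rel G f g M) \<kappa>D"
  by (rule cyl_key_kernel[OF M_pos])

lemma verts_B: "verts B = clB ` VB"
  unfolding cyl_def by (rule quot_graph_verts[OF kernel_B])

lemma verts_C: "verts C = clC ` VC"
  unfolding cyl_def by (rule quot_graph_verts[OF kernel_C])

lemma verts_D: "verts D = clD ` VD"
  unfolding cyl_def by (rule quot_graph_verts[OF kernel_D])

lemma edge_B: "edge B X Y \<longleftrightarrow> X \<in> clB ` VB \<and> Y \<in> clB ` VB \<and> (\<exists>x\<in>X. \<exists>y\<in>Y. edge PB x y)"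
  unfolding cyl_def by (rule quot_graph_edge[OF kernel_B])

lemma edge_C: "edge C X Y \<longleftrightarrow> X \<in> clC ` VC \<and> Y \<in> clC ` VC \<and> (\<exists>x\<in>X. \<exists>y\<in>Y. edge PC x y)"
  unfolding cyl_def by (rule quot_graph_edge[OF kernel_C])

lemma edge_D: "edge D X Y \<longleftrightarrow> X \<in> clD ` VD \<and> Y \<in> clD ` VD \<and> (\<exists>x\<in>X. \<exists>y\<in>Y. edge PD x y)"
  unfolding cyl_def by (rule quot_graph_edge[OF kernel_D])

lemma cyl_cls_B: "x \<in> VB \<Longrightarrow> cyl_cls G H G f id mB x = clB x"
  unfolding cyl_cls_def by (rule gen_eqv_class[OF kernel_B])

lemma cyl_cls_C: "x \<in> VC \<Longrightarrow> cyl_cls G G K id g mC x = clC x"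
  unfolding cyl_cls_def by (rule gen_eqv_class[OF kernel_C])

lemma cyl_cls_D: "x \<in> VD \<Longrightarrow> cyl_cls G H K f g M x = clD x"
  unfolding cyl_cls_def by (rule gen_eqv_class[OF kernel_D])

lemma M_minus_mC: "M - mC = q1"
  by simp

lemma edge_G_verts: "edge G v v' \<Longrightarrow> v \<in> verts G \<and> v' \<in> verts G"
  using graph_G by (simp add: is_graph_def)

definition c_pre :: "'h + ('g \<times> nat) + 'g \<Rightarrow> 'h + ('g \<times> nat) + 'k" where
  "c_pre x = (case x of Inl h \<Rightarrow> Inl h | Inr (Inl (v, t)) \<Rightarrow> Inr (Inl (v, t)) | Inr (Inr v) \<Rightarrow> Inr (Inl (v, mB)))"

definition d_pre :: "'g + ('g \<times> nat) + 'k \<Rightarrow> 'h + ('g \<times> nat) + 'k" where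
  "d_pre x = (case x of Inl v \<Rightarrow> Inr (Inl (v, q1)) | Inr (Inl (v, t)) \<Rightarrow> Inr (Inl (v, t + q1))
     | Inr (Inr k) \<Rightarrow> Inr (Inr k))"

lemma c_pre_vert: "x \<in> VB \<Longrightarrow> c_pre x \<in> VD"
  using f_map by (cases x rule: cyl_vertex_cases) (auto simp: c_pre_def graph_map_def)

lemma d_pre_vert: "x \<in> VC \<Longrightarrow> d_pre x \<in> VD"
  using g_map by (cases x rule: cyl_vertex_cases) (auto simp: d_pre_def graph_map_def)

lemma c_pre_edge: "edge PB x y \<Longrightarrow> edge PD (c_pre x) (c_pre y)"
  using edge_G_verts
  by (cases x rule: cyl_vertex_cases; cases y rule: cyl_vertex_cases) (auto simp: c_pre_def)

lemma d_pre_edge: "edge PC x y \<Longrightarrow> edge PD (d_pre x) (d_pre y)"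
  using edge_G_verts
  by (cases x rule: cyl_vertex_cases; cases y rule: cyl_vertex_cases) (auto simp: d_pre_def)

lemma c_pre_key_iff: "x \<in> VB \<Longrightarrow> y \<in> VB \<Longrightarrow> \<kappa>D (c_pre x) = \<kappa>D (c_pre y) \<longleftrightarrow> \<kappa>B x = \<kappa>B y"
  using q2_or_inj_g
  by (cases x rule: cyl_vertex_cases; cases y rule: cyl_vertex_cases)
    (auto simp: c_pre_def cyl_key_id_right_def cyl_key_def inj_on_def)

lemma d_pre_key_iff: "x \<in> VC \<Longrightarrow> y \<in> VC \<Longrightarrow> \<kappa>D (d_pre x) = \<kappa>D (d_pre y) \<longleftrightarrow> \<kappa>C x = \<kappa>C y"
  using q1_or_inj_f q1_or_q2
  by (cases x rule: cyl_vertex_cases; cases y rule: cyl_vertex_cases)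
    (auto simp: d_pre_def cyl_key_id_left_def cyl_key_def inj_on_def)

lemma c_class: "x \<in> VB \<Longrightarrow> c (clB x) = clD (c_pre x)"
proof -
  assume x: "x \<in> VB"
  define y where "y = (SOME y. y \<in> clB x)"
  have y: "y \<in> VB" "\<kappa>B y = \<kappa>B x" using some_in_key_class[OF x] unfolding y_def mem_key_class_iff by auto
  have "c (clB x) = cyl_cls G H K f g M (c_pre y)"
    by (simp add: lmap_def c_pre_def y_def)
  also have "\<dots> = clD (c_pre y)" using cyl_cls_D c_pre_vert y by blast
  also have "\<dots> = clD (c_pre x)"
    using key_class_eq_iff[OF c_pre_vert[OF y(1)], of \<kappa>D "c_pre x"] c_pre_key_iff[OF y(1) x] y by simp
  finally show ?thesis .
qed

lemma d_class: "x \<in> VC \<Longrightarrow> d (clC x) = clD (d_pre x)"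
proof -
  assume x: "x \<in> VC"
  define y where "y = (SOME y. y \<in> clC x)"
  have y: "y \<in> VC" "\<kappa>C y = \<kappa>C x" using some_in_key_class[OF x] unfolding y_def mem_key_class_iff by auto
  have "d (clC x) = cyl_cls G H K f g M (d_pre y)"
    unfolding rmap_def d_pre_def y_def M_minus_mC ..
  also have "\<dots> = clD (d_pre y)" using cyl_cls_D d_pre_vert y by blast
  also have "\<dots> = clD (d_pre x)"
    using key_class_eq_iff[OF d_pre_vert[OF y(1)], of \<kappa>D "d_pre x"] d_pre_key_iff[OF y(1) x] y by simp
  finally show ?thesis .
qed

lemma verts_A: "verts A = verts G \<times> {0..p}"
  by (simp add: box_def interval_def)

lemma edge_A: "edge A (v, t) (v', t') \<longleftrightarrow>
    (v = v' \<and> v \<in> verts G \<and> t \<le> p \<and> t' \<le> p \<and> (t = t' \<or> t = Suc t' \<or> t' = Suc t))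
  \<or> (edge G v v' \<and> t = t' \<and> t \<le> p)"
  by (auto simp: box_def interval_def)

lemma some_in_cyl_incl:
  assumes "v \<in> verts G" "t \<le> p"
  obtains "(SOME y. y \<in> cyl_incl G p (v, t)) = Inr (Inl (v, t))"
    | "(SOME y. y \<in> cyl_incl G p (v, t)) = Inl v" "t = 0"
    | "(SOME y. y \<in> cyl_incl G p (v, t)) = Inr (Inr v)" "t = p"
proof -
  have "(SOME y. y \<in> cyl_incl G p (v, t)) \<in> cyl_cls G G G id id p (Inr (Inl (v, t)))"
    unfolding cyl_incl_def using cyl_id_id_class_self[OF assms] by (rule someI)
  from cyl_id_id_class[OF assms this] show thesis using that unfolding cyl_incl_def by blast
qed

lemma a_eq: "v \<in> verts G \<Longrightarrow> t \<le> p \<Longrightarrow> a (v, t) = clB (Inr (Inl (v, t + q1)))"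
proof -
  assume v: "v \<in> verts G" and t: "t \<le> p"
  have vt: "Inr (Inl (v, t + q1)) \<in> VB" "Inr (Inr v) \<in> VB" using v t by simp_all
  have "clB (Inr (Inr v)) = clB (Inr (Inl (v, p + q1)))"
    using key_class_eq_iff[OF vt(2), of \<kappa>B "Inr (Inl (v, p + q1))"] by (simp add: cyl_key_id_right_def)
  then show ?thesis
    by (cases rule: some_in_cyl_incl[OF v t]) (simp_all add: rmap_def cyl_cls_B v t)
qed

lemma b_eq: "v \<in> verts G \<Longrightarrow> t \<le> p \<Longrightarrow> b (v, t) = clC (Inr (Inl (v, t)))"
proof -
  assume v: "v \<in> verts G" and t: "t \<le> p"
  have vt: "Inr (Inl (v, t)) \<in> VC" "Inl v \<in> VC" using v t by simp_all
  have "clC (Inl v) = clC (Inr (Inl (v, 0)))"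
    using key_class_eq_iff[OF vt(2), of \<kappa>C "Inr (Inl (v, 0))"] by (simp add: cyl_key_id_left_def)
  then show ?thesis
    by (cases rule: some_in_cyl_incl[OF v t]) (simp_all add: lmap_def cyl_cls_C[OF vt(1)] cyl_cls_C v t)
qed

lemma commutes: "x \<in> verts A \<Longrightarrow> c (a x) = d (b x)"
proof -
  assume "x \<in> verts A"
  then obtain v t where x: "x = (v, t)" "v \<in> verts G" "t \<le> p" by (auto simp: verts_A)
  then have "Inr (Inl (v, t + q1)) \<in> VB" "Inr (Inl (v, t)) \<in> VC" by simp_all
  then show ?thesis using x a_eq b_eq c_class d_class by (simp add: c_pre_def d_pre_def)
qed

lemma c_map: "graph_map B D c"
  unfolding cyl_def
  by (rule quot_graph_map[OF kernel_B kernel_D, where \<phi> = c_pre])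
    (simp_all add: c_pre_vert c_pre_edge c_class)

lemma d_map: "graph_map C D d"
  unfolding cyl_def
  by (rule quot_graph_map[OF kernel_C kernel_D, where \<phi> = d_pre])
    (simp_all add: d_pre_vert d_pre_edge d_class)

lemma inj_c: "inj_on c (verts B)"
  unfolding cyl_def
  by (rule quot_graph_map_inj[OF kernel_B, where \<phi> = c_pre])
    (simp_all add: c_pre_vert c_pre_key_iff c_class)

lemma inj_d: "inj_on d (verts C)"
  unfolding cyl_def
  by (rule quot_graph_map_inj[OF kernel_C, where \<phi> = d_pre])
    (simp_all add: d_pre_vert d_pre_key_iff d_class)

lemma a_map: "graph_map A B a"
  unfolding graph_map_def
proof (intro conjI allI impI ballI)
  fix x assume "x \<in> verts A"
  then obtain v t where "x = (v, t)" "v \<in> verts G" "t \<le> p" by (auto simp: verts_A)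
  then show "a x \<in> verts B" using a_eq verts_B by auto
next
  fix x y assume e: "edge A x y"
  obtain v t v' t' where xy: "x = (v, t)" "y = (v', t')" by fastforce
  have vt: "v \<in> verts G" "v' \<in> verts G" "t \<le> p" "t' \<le> p" using e xy edge_G_verts by (auto simp: edge_A)
  then have m: "Inr (Inl (v, t + q1)) \<in> VB" "Inr (Inl (v', t' + q1)) \<in> VB" by simp_all
  have "edge PB (Inr (Inl (v, t + q1))) (Inr (Inl (v', t' + q1)))"
    using e xy vt by (auto simp: edge_A)
  moreover have "Inr (Inl (v, t + q1)) \<in> clB (Inr (Inl (v, t + q1)))"
    "Inr (Inl (v', t' + q1)) \<in> clB (Inr (Inl (v', t' + q1)))"
    using m by (simp_all add: key_class_self)
  moreover have "a x = clB (Inr (Inl (v, t + q1)))" "a y = clB (Inr (Inl (v', t' + q1)))"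
    using xy vt a_eq by auto
  ultimately show "edge B (a x) (a y)" using m unfolding edge_B by blast
qed

lemma b_map: "graph_map A C b"
  unfolding graph_map_def
proof (intro conjI allI impI ballI)
  fix x assume "x \<in> verts A"
  then obtain v t where "x = (v, t)" "v \<in> verts G" "t \<le> p" by (auto simp: verts_A)
  then show "b x \<in> verts C" using b_eq verts_C by auto
next
  fix x y assume e: "edge A x y"
  obtain v t v' t' where xy: "x = (v, t)" "y = (v', t')" by fastforce
  have vt: "v \<in> verts G" "v' \<in> verts G" "t \<le> p" "t' \<le> p" using e xy edge_G_verts by (auto simp: edge_A)
  then have m: "Inr (Inl (v, t)) \<in> VC" "Inr (Inl (v', t')) \<in> VC" by simp_all
  have "edge PC (Inr (Inl (v, t))) (Inr (Inl (v', t')))"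
    using e xy vt by (auto simp: edge_A)
  moreover have "Inr (Inl (v, t)) \<in> clC (Inr (Inl (v, t)))" "Inr (Inl (v', t')) \<in> clC (Inr (Inl (v', t')))"
    using m by (simp_all add: key_class_self)
  moreover have "b x = clC (Inr (Inl (v, t)))" "b y = clC (Inr (Inl (v', t')))"
    using xy vt b_eq by auto
  ultimately show "edge C (b x) (b y)" using m unfolding edge_C by blast
qed

definition level :: "'h + ('g \<times> nat) + 'k \<Rightarrow> nat" where
  "level x = (case x of Inl _ \<Rightarrow> 0 | Inr (Inl (v, t)) \<Rightarrow> t | Inr (Inr _) \<Rightarrow> M)"

definition class_level :: "('h + ('g \<times> nat) + 'k) set \<Rightarrow> nat" where
  "class_level X = level (SOME x. x \<in> X)"

lemma level_key: "x \<in> VD \<Longrightarrow> y \<in> VD \<Longrightarrow> \<kappa>D x = \<kappa>D y \<Longrightarrow> level x = level y"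
  by (cases x rule: cyl_vertex_cases; cases y rule: cyl_vertex_cases)
    (auto simp: cyl_key_def level_def split: if_splits)

lemma class_level_eq: "x \<in> VD \<Longrightarrow> class_level (clD x) = level x"
proof -
  assume x: "x \<in> VD"
  have "(SOME y. y \<in> clD x) \<in> VD" "\<kappa>D (SOME y. y \<in> clD x) = \<kappa>D x"
    using some_in_key_class[OF x, of \<kappa>D] unfolding mem_key_class_iff by simp_all
  then show ?thesis unfolding class_level_def using level_key x by blast
qed

lemma level_edge: "edge PD x y \<Longrightarrow> level x \<le> level y + 1"
  by (cases x rule: cyl_vertex_cases; cases y rule: cyl_vertex_cases) (auto simp: level_def)

lemma edge_D_obtain:
  assumes "edge D X Y"
  obtains x y where "x \<in> VD" "y \<in> VD" "X = clD x" "Y = clD y" "edge PD x y"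
proof -
  obtain x0 y0 x y where xy: "x0 \<in> VD" "y0 \<in> VD" "X = clD x0" "Y = clD y0" "x \<in> X" "y \<in> Y" "edge PD x y"
    using assms unfolding edge_D by blast
  have "clD x = X" "x \<in> VD" using key_class_of_member[of x VD \<kappa>D x0] xy(3,5) by auto
  moreover have "clD y = Y" "y \<in> VD" using key_class_of_member[of y VD \<kappa>D y0] xy(4,6) by auto
  ultimately show ?thesis using that[of x y] xy(7) by simp
qed

lemma class_level_edge: "edge D X Y \<Longrightarrow> class_level X \<le> class_level Y + 1"
  by (elim edge_D_obtain) (metis class_level_eq level_edge)

lemma level_top_edge:
  "edge PD x y \<Longrightarrow> level x = M \<Longrightarrow> level y < M \<Longrightarrow> \<exists>v\<in>verts G. x = Inr (Inl (v, M))"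
  using M_pos edge_G_verts
  by (cases x rule: cyl_vertex_cases; cases y rule: cyl_vertex_cases) (auto simp: level_def)

lemma level_bottom_edge:
  "edge PD x y \<Longrightarrow> level x = 0 \<Longrightarrow> 0 < level y \<Longrightarrow> \<exists>v\<in>verts G. x = Inr (Inl (v, 0))"
  using M_pos edge_G_verts
  by (cases x rule: cyl_vertex_cases; cases y rule: cyl_vertex_cases) (auto simp: level_def)

lemma c_pre_level: "w \<in> VB \<Longrightarrow> level (c_pre w) \<le> mB"
  by (cases w rule: cyl_vertex_cases) (auto simp: c_pre_def level_def)

lemma d_pre_level: "w \<in> VC \<Longrightarrow> q1 \<le> level (d_pre w)"
  by (cases w rule: cyl_vertex_cases) (auto simp: d_pre_def level_def)

definition c_pre_inv :: "'h + ('g \<times> nat) + 'k \<Rightarrow> 'h + ('g \<times> nat) + 'g" where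
  "c_pre_inv x = (case x of Inl h \<Rightarrow> Inl h | Inr (Inl vt) \<Rightarrow> Inr (Inl vt) | Inr (Inr k) \<Rightarrow> undefined)"

definition d_pre_inv :: "'h + ('g \<times> nat) + 'k \<Rightarrow> 'g + ('g \<times> nat) + 'k" where
  "d_pre_inv x = (case x of Inl h \<Rightarrow> undefined | Inr (Inl (v, t)) \<Rightarrow> Inr (Inl (v, t - q1))
     | Inr (Inr k) \<Rightarrow> Inr (Inr k))"

lemma c_pre_inv_edge:
  assumes "edge PD x y" "level x \<le> mB" "level y \<le> mB" "\<not> (level x = M \<and> level y = M)"
  shows "c_pre (c_pre_inv x) = x \<and> c_pre (c_pre_inv y) = y \<and> edge PB (c_pre_inv x) (c_pre_inv y)"
  using assms unfolding level_def
  by (cases x rule: cyl_vertex_cases; cases y rule: cyl_vertex_cases)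
    (auto simp: c_pre_def c_pre_inv_def)

lemma d_pre_inv_edge:
  assumes "edge PD x y" "q1 \<le> level x" "q1 \<le> level y" "\<not> (level x = 0 \<and> level y = 0)"
  shows "d_pre (d_pre_inv x) = x \<and> d_pre (d_pre_inv y) = y \<and> edge PC (d_pre_inv x) (d_pre_inv y)"
  using assms unfolding level_def
  by (cases x rule: cyl_vertex_cases; cases y rule: cyl_vertex_cases)
    (auto simp: d_pre_def d_pre_inv_def)

lemma lift_vertex_B:
  assumes X: "X \<in> verts D" and low: "class_level X \<le> mB"
    and top: "class_level X = M \<Longrightarrow> \<exists>Y. edge D X Y \<and> class_level Y < M"
  shows "\<exists>z\<in>verts B. c z = X"
proof -
  obtain x where x: "x \<in> VD" "X = clD x" using X verts_D by auto
  have "\<exists>x'\<in>X. \<exists>w\<in>VB. c_pre w = x'"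
  proof (cases x rule: cyl_vertex_cases)
    case (H h)
    then show ?thesis using x key_class_self[OF x(1)]
      by (intro bexI[of _ x] bexI[of _ "Inl h"]) (auto simp: c_pre_def)
  next
    case (mid v t)
    have "t \<le> mB" using low x class_level_eq mid by (simp add: level_def)
    then show ?thesis using x key_class_self[OF x(1)] mid
      by (intro bexI[of _ x] bexI[of _ "Inr (Inl (v, t))"]) (auto simp: c_pre_def)
  next
    case (K k)
    have top_level: "class_level X = M" using x class_level_eq K by (simp add: level_def)
    then obtain Y where Y: "edge D X Y" "class_level Y < M" using top by blast
    then obtain x' y' where xy': "x' \<in> VD" "y' \<in> VD" "X = clD x'" "Y = clD y'" "edge PD x' y'"
      by (elim edge_D_obtain)
    have "level x' = M" "level y' < M" using xy' top_level Y class_level_eq by auto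
    then obtain v where v: "v \<in> verts G" "x' = Inr (Inl (v, M))" using level_top_edge xy'(5) by blast
    have "M \<le> mB" using top_level low by simp
    then show ?thesis using v xy' key_class_self[OF xy'(1)]
      by (intro bexI[of _ x'] bexI[of _ "Inr (Inl (v, M))"]) (auto simp: c_pre_def)
  qed
  then obtain x' w where xw: "x' \<in> X" "w \<in> VB" "c_pre w = x'" by blast
  have "clD x' = X" using key_class_of_member[of x' VD \<kappa>D x] xw(1) x(2) by simp
  then show ?thesis using c_class[OF xw(2)] xw verts_B by auto
qed

lemma lift_vertex_C:
  assumes X: "X \<in> verts D" and high: "q1 \<le> class_level X"
    and bottom: "class_level X = 0 \<Longrightarrow> \<exists>Y. edge D X Y \<and> 0 < class_level Y"
  shows "\<exists>z\<in>verts C. d z = X"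
proof -
  obtain x where x: "x \<in> VD" "X = clD x" using X verts_D by auto
  have "\<exists>x'\<in>X. \<exists>w\<in>VC. d_pre w = x'"
  proof (cases x rule: cyl_vertex_cases)
    case (H h)
    have bottom_level: "class_level X = 0" using x class_level_eq H by (simp add: level_def)
    then obtain Y where Y: "edge D X Y" "0 < class_level Y" using bottom by blast
    then obtain x' y' where xy': "x' \<in> VD" "y' \<in> VD" "X = clD x'" "Y = clD y'" "edge PD x' y'"
      by (elim edge_D_obtain)
    have "level x' = 0" "0 < level y'" using xy' bottom_level Y class_level_eq by auto
    then obtain v where v: "v \<in> verts G" "x' = Inr (Inl (v, 0))" using level_bottom_edge xy'(5) by blast
    have "d_pre (Inr (Inl (v, 0))) = Inr (Inl (v, q1))" by (simp add: d_pre_def)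
    moreover have "q1 = 0" using bottom_level high by simp
    ultimately show ?thesis using v xy' key_class_self[OF xy'(1)]
      by (intro bexI[of _ x'] bexI[of _ "Inr (Inl (v, 0))"]) auto
  next
    case (mid v t)
    have "q1 \<le> t" "t \<le> M" using high x class_level_eq mid by (auto simp: level_def)
    then show ?thesis using x key_class_self[OF x(1)] mid
      by (intro bexI[of _ x] bexI[of _ "Inr (Inl (v, t - q1))"]) (auto simp: d_pre_def)
  next
    case (K k)
    then show ?thesis using x key_class_self[OF x(1)]
      by (intro bexI[of _ x] bexI[of _ "Inr (Inr k)"]) (auto simp: d_pre_def)
  qed
  then obtain x' w where xw: "x' \<in> X" "w \<in> VC" "d_pre w = x'" by blast
  have "clD x' = X" using key_class_of_member[of x' VD \<kappa>D x] xw(1) x(2) by simp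
  then show ?thesis using d_class[OF xw(2)] xw verts_C by auto
qed

lemma lift_edge_B:
  assumes z: "z1 \<in> verts B" "z2 \<in> verts B" and e: "edge D (c z1) (c z2)"
    and not_top: "z1 \<noteq> z2 \<Longrightarrow> \<not> (class_level (c z1) = M \<and> class_level (c z2) = M)"
  shows "edge B z1 z2"
proof -
  obtain w1 w2 where w: "w1 \<in> VB" "z1 = clB w1" "w2 \<in> VB" "z2 = clB w2" using z verts_B by auto
  show ?thesis
  proof (cases "z1 = z2")
    case True
    have "edge PB w1 w1" using cyl_pre_refl[OF graph_G graph_H graph_G w(1)] .
    then show ?thesis using True w key_class_self[OF w(1)] unfolding edge_B by blast
  next
    case False
    obtain x y where xy: "x \<in> VD" "y \<in> VD" "c z1 = clD x" "c z2 = clD y" "edge PD x y"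
      using e by (elim edge_D_obtain)
    have "clD x = clD (c_pre w1)" "clD y = clD (c_pre w2)" using xy(3,4) c_class w by auto
    then have key: "\<kappa>D x = \<kappa>D (c_pre w1)" "\<kappa>D y = \<kappa>D (c_pre w2)"
      using key_class_eq_iff[OF xy(1), of \<kappa>D] key_class_eq_iff[OF xy(2), of \<kappa>D] by simp_all
    have "level x \<le> mB" "level y \<le> mB"
      using level_key[OF xy(1) c_pre_vert] level_key[OF xy(2) c_pre_vert] key c_pre_level w by auto
    moreover have "\<not> (level x = M \<and> level y = M)" using False not_top xy class_level_eq by simp
    ultimately have inv: "c_pre (c_pre_inv x) = x" "c_pre (c_pre_inv y) = y"
      and inv_edge: "edge PB (c_pre_inv x) (c_pre_inv y)"
      using c_pre_inv_edge[OF xy(5)] by blast+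
    have "c_pre_inv x \<in> VB" "c_pre_inv y \<in> VB"
      using cyl_pre_edge_verts[OF graph_G graph_H graph_G inv_edge] by simp_all
    moreover have "\<kappa>B (c_pre_inv x) = \<kappa>B w1" "\<kappa>B (c_pre_inv y) = \<kappa>B w2"
      using c_pre_key_iff[OF calculation(1) w(1)] c_pre_key_iff[OF calculation(2) w(3)] inv key by simp_all
    ultimately have "c_pre_inv x \<in> z1" "c_pre_inv y \<in> z2" using w by (simp_all add: mem_key_class_iff)
    then show ?thesis using z verts_B inv_edge unfolding edge_B by blast
  qed
qed

lemma lift_edge_C:
  assumes z: "z1 \<in> verts C" "z2 \<in> verts C" and e: "edge D (d z1) (d z2)"
    and not_bottom: "z1 \<noteq> z2 \<Longrightarrow> \<not> (class_level (d z1) = 0 \<and> class_level (d z2) = 0)"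
  shows "edge C z1 z2"
proof -
  obtain w1 w2 where w: "w1 \<in> VC" "z1 = clC w1" "w2 \<in> VC" "z2 = clC w2" using z verts_C by auto
  show ?thesis
  proof (cases "z1 = z2")
    case True
    have "edge PC w1 w1" using cyl_pre_refl[OF graph_G graph_G graph_K w(1)] .
    then show ?thesis using True w key_class_self[OF w(1)] unfolding edge_C by blast
  next
    case False
    obtain x y where xy: "x \<in> VD" "y \<in> VD" "d z1 = clD x" "d z2 = clD y" "edge PD x y"
      using e by (elim edge_D_obtain)
    have "clD x = clD (d_pre w1)" "clD y = clD (d_pre w2)" using xy(3,4) d_class w by auto
    then have key: "\<kappa>D x = \<kappa>D (d_pre w1)" "\<kappa>D y = \<kappa>D (d_pre w2)"
      using key_class_eq_iff[OF xy(1), of \<kappa>D] key_class_eq_iff[OF xy(2), of \<kappa>D] by simp_all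
    have "q1 \<le> level x" "q1 \<le> level y"
      using level_key[OF xy(1) d_pre_vert] level_key[OF xy(2) d_pre_vert] key d_pre_level w by auto
    moreover have "\<not> (level x = 0 \<and> level y = 0)" using False not_bottom xy class_level_eq by simp
    ultimately have inv: "d_pre (d_pre_inv x) = x" "d_pre (d_pre_inv y) = y"
      and inv_edge: "edge PC (d_pre_inv x) (d_pre_inv y)"
      using d_pre_inv_edge[OF xy(5)] by blast+
    have "d_pre_inv x \<in> VC" "d_pre_inv y \<in> VC"
      using cyl_pre_edge_verts[OF graph_G graph_G graph_K inv_edge] by simp_all
    moreover have "\<kappa>C (d_pre_inv x) = \<kappa>C w1" "\<kappa>C (d_pre_inv y) = \<kappa>C w2"
      using d_pre_key_iff[OF calculation(1) w(1)] d_pre_key_iff[OF calculation(2) w(3)] inv key by simp_all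
    ultimately have "d_pre_inv x \<in> z1" "d_pre_inv y \<in> z2" using w by (simp_all add: mem_key_class_iff)
    then show ?thesis using z verts_C inv_edge unfolding edge_C by blast
  qed
qed

lemma lift_cube_B:
  assumes e: "e \<in> cubes D m"
    and low: "\<And>x. length x = m \<Longrightarrow> class_level (e x) \<le> mB"
    and top: "\<And>y y'. length y = m \<Longrightarrow> class_level (e y) = M \<Longrightarrow>
      1 \<le> m \<and> (edge (cube_graph m) y y' \<longrightarrow> y' \<noteq> y \<longrightarrow> class_level (e y') < M)"
  shows "\<exists>e'\<in>cubes B m. \<forall>x. length x = m \<longrightarrow> c (e' x) = e x"
proof -
  have "\<exists>z. z \<in> verts B \<and> c z = e x" if x: "length x = m" for x
  proof -
    have "\<exists>Y. edge D (e x) Y \<and> class_level Y < M" if extreme: "class_level (e x) = M"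
    proof -
      obtain y' where "edge (cube_graph m) x y'" "y' \<noteq> x" using cube_has_neighbour x top[OF x extreme] by blast
      then show ?thesis using top[OF x extreme] cubes_edge[OF e] by blast
    qed
    then have "\<exists>z\<in>verts B. c z = e x" by (rule lift_vertex_B[OF cubes_vert[OF e x] low[OF x]])
    then show ?thesis by blast
  qed
  then obtain e0 where e0: "\<And>x. length x = m \<Longrightarrow> e0 x \<in> verts B \<and> c (e0 x) = e x" by metis
  define e' where "e' x = (if length x = m then e0 x else undefined)" for x
  have "e' \<in> cubes B m"
  proof (rule cubesI)
    fix x y assume xy: "edge (cube_graph m) x y"
    then have l: "length x = m" "length y = m" using cube_graph_edge_length by auto
    show "edge B (e' x) (e' y)"
    proof (rule lift_edge_B)
      show "e' x \<in> verts B" "e' y \<in> verts B" "edge D (c (e' x)) (c (e' y))"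
        using e0 l cubes_edge[OF e xy] by (simp_all add: e'_def)
      assume "e' x \<noteq> e' y"
      then have "x \<noteq> y" by auto
      then show "\<not> (class_level (c (e' x)) = M \<and> class_level (c (e' y)) = M)"
        using top[OF l(1), of y] xy e0 l by (auto simp: e'_def)
    qed
  qed (use e0 in \<open>auto simp: e'_def\<close>)
  moreover have "\<forall>x. length x = m \<longrightarrow> c (e' x) = e x" using e0 by (simp add: e'_def)
  ultimately show ?thesis by blast
qed

lemma lift_cube_C:
  assumes e: "e \<in> cubes D m"
    and high: "\<And>x. length x = m \<Longrightarrow> q1 \<le> class_level (e x)"
    and bottom: "\<And>y y'. length y = m \<Longrightarrow> class_level (e y) = 0 \<Longrightarrow>
      1 \<le> m \<and> (edge (cube_graph m) y y' \<longrightarrow> y' \<noteq> y \<longrightarrow> 0 < class_level (e y'))"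
  shows "\<exists>e'\<in>cubes C m. \<forall>x. length x = m \<longrightarrow> d (e' x) = e x"
proof -
  have "\<exists>z. z \<in> verts C \<and> d z = e x" if x: "length x = m" for x
  proof -
    have "\<exists>Y. edge D (e x) Y \<and> 0 < class_level Y" if extreme: "class_level (e x) = 0"
    proof -
      obtain y' where "edge (cube_graph m) x y'" "y' \<noteq> x" using cube_has_neighbour x bottom[OF x extreme] by blast
      then show ?thesis using bottom[OF x extreme] cubes_edge[OF e] by blast
    qed
    then have "\<exists>z\<in>verts C. d z = e x" by (rule lift_vertex_C[OF cubes_vert[OF e x] high[OF x]])
    then show ?thesis by blast
  qed
  then obtain e0 where e0: "\<And>x. length x = m \<Longrightarrow> e0 x \<in> verts C \<and> d (e0 x) = e x" by metis
  define e' where "e' x = (if length x = m then e0 x else undefined)" for x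
  have "e' \<in> cubes C m"
  proof (rule cubesI)
    fix x y assume xy: "edge (cube_graph m) x y"
    then have l: "length x = m" "length y = m" using cube_graph_edge_length by auto
    show "edge C (e' x) (e' y)"
    proof (rule lift_edge_C)
      show "e' x \<in> verts C" "e' y \<in> verts C" "edge D (d (e' x)) (d (e' y))"
        using e0 l cubes_edge[OF e xy] by (simp_all add: e'_def)
      assume "e' x \<noteq> e' y"
      then have "x \<noteq> y" by auto
      then show "\<not> (class_level (d (e' x)) = 0 \<and> class_level (d (e' y)) = 0)"
        using bottom[OF l(1), of y] xy e0 l by (auto simp: e'_def intro: gr0I)
    qed
  qed (use e0 in \<open>auto simp: e'_def\<close>)
  moreover have "\<forall>x. length x = m \<longrightarrow> d (e' x) = e x" using e0 by (simp add: e'_def)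
  ultimately show ?thesis by blast
qed

lemma cube_class_level_lipschitz:
  "e \<in> cubes D m \<Longrightarrow> edge (cube_graph m) x y \<Longrightarrow> class_level (e x) \<le> class_level (e y) + 1"
  using class_level_edge cubes_edge by blast

lemma cube_class_level_spread:
  assumes "e \<in> cubes D m" "length x = m" "length y = m"
  shows "class_level (e x) \<le> class_level (e y) + m"
proof -
  have "\<And>x y. edge (cube_graph m) x y \<Longrightarrow> class_level (e x) \<le> class_level (e y) + 1"
    using cube_class_level_lipschitz[OF assms(1)] .
  from lipschitz_spread[of m "\<lambda>x. class_level (e x)", OF this assms(2,3)] show ?thesis .
qed

lemma top_corner_isolated:
  assumes e: "e \<in> cubes D m" and m: "m \<le> Suc p" and "q2 = 0"
    and x0: "length x0 = m" "class_level (e x0) < q1" and y: "length y = m" "class_level (e y) = M"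
  shows "1 \<le> m \<and> (edge (cube_graph m) y y' \<longrightarrow> y' \<noteq> y \<longrightarrow> class_level (e y') < M)"
proof -
  have lipschitz: "\<And>x y. edge (cube_graph m) x y \<Longrightarrow> class_level (e x) \<le> class_level (e y) + 1"
    using cube_class_level_lipschitz[OF e] .
  have "class_level (e x0) + m \<le> class_level (e y)" using x0 y m \<open>q2 = 0\<close> by simp
  then have "edge (cube_graph m) y y' \<longrightarrow> y' \<noteq> y \<longrightarrow> class_level (e y') < class_level (e y)"
    using lipschitz_strict_max[of m "\<lambda>x. class_level (e x)", OF lipschitz] x0 y
    by blast
  moreover have "1 \<le> m" using cube_class_level_spread[OF e y(1) x0(1)] x0 y \<open>q2 = 0\<close> by simp
  ultimately show ?thesis using y by simp
qed

lemma bottom_corner_isolated: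
  assumes e: "e \<in> cubes D m" and m: "m \<le> Suc p"
    and x1: "length x1 = m" "mB < class_level (e x1)" and y: "length y = m" "class_level (e y) = 0"
  shows "1 \<le> m \<and> (edge (cube_graph m) y y' \<longrightarrow> y' \<noteq> y \<longrightarrow> 0 < class_level (e y'))"
proof -
  have lipschitz: "\<And>x y. edge (cube_graph m) x y \<Longrightarrow> class_level (e x) \<le> class_level (e y) + 1"
    using cube_class_level_lipschitz[OF e] .
  have "class_level (e y) + m \<le> class_level (e x1)" using x1 y m by simp
  then have "edge (cube_graph m) y y' \<longrightarrow> y' \<noteq> y \<longrightarrow> class_level (e y) < class_level (e y')"
    using lipschitz_strict_min[of m "\<lambda>x. class_level (e x)", OF lipschitz] x1 y
    by blast
  moreover have "1 \<le> m" using cube_class_level_spread[OF e x1(1) y(1)] x1 y by simp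
  ultimately show ?thesis using y by simp
qed

lemma cubes_lift:
  assumes m: "m \<le> Suc p" and e: "e \<in> cubes D m"
  shows "(\<exists>e'\<in>cubes B m. \<forall>x. length x = m \<longrightarrow> c (e' x) = e x)
       \<or> (\<exists>e'\<in>cubes C m. \<forall>x. length x = m \<longrightarrow> d (e' x) = e x)"
proof (cases "(\<forall>x. length x = m \<longrightarrow> class_level (e x) \<le> mB)
             \<and> (1 \<le> q2 \<or> (\<exists>x0. length x0 = m \<and> class_level (e x0) < q1))")
  case True
  have "\<exists>e'\<in>cubes B m. \<forall>x. length x = m \<longrightarrow> c (e' x) = e x"
  proof (rule lift_cube_B[OF e])
    fix x :: "bool list" assume "length x = m"
    then show "class_level (e x) \<le> mB" using True by simp
  next
    fix y y' :: "bool list" assume y: "length y = m" "class_level (e y) = M"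
    then have "q2 = 0" using True by fastforce
    then obtain x0 where "length x0 = m" "class_level (e x0) < q1" using True by auto
    then show "1 \<le> m \<and> (edge (cube_graph m) y y' \<longrightarrow> y' \<noteq> y \<longrightarrow> class_level (e y') < M)"
      using top_corner_isolated[OF e m \<open>q2 = 0\<close>] y by blast
  qed
  then show ?thesis ..
next
  case False
  then consider (high) x1 where "length x1 = m" "mB < class_level (e x1)"
    | (no_K) "q2 = 0" "\<forall>x. length x = m \<longrightarrow> q1 \<le> class_level (e x)"
    by (auto simp: not_le not_less)
  then have "\<exists>e'\<in>cubes C m. \<forall>x. length x = m \<longrightarrow> d (e' x) = e x"
  proof cases
    case high
    show ?thesis
    proof (rule lift_cube_C[OF e])
      fix x :: "bool list" assume "length x = m"
      then show "q1 \<le> class_level (e x)" using cube_class_level_spread[OF e high(1)] high m by fastforce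
    next
      fix y y' :: "bool list" assume "length y = m" "class_level (e y) = 0"
      then show "1 \<le> m \<and> (edge (cube_graph m) y y' \<longrightarrow> y' \<noteq> y \<longrightarrow> 0 < class_level (e y'))"
        using bottom_corner_isolated[OF e m high] by blast
    qed
  next
    case no_K
    then have "1 \<le> q1" using q1_or_q2 by simp
    show ?thesis
      by (rule lift_cube_C[OF e]) (use no_K \<open>1 \<le> q1\<close> in fastforce)+
  qed
  then show ?thesis ..
qed

lemma pullback_rep:
  assumes z: "z \<in> VB" and w: "w \<in> VC" and key: "\<kappa>D (c_pre z) = \<kappa>D (d_pre w)"
  obtains v t where "v \<in> verts G" "t \<le> p" "\<kappa>D (Inr (Inl (v, t + q1))) = \<kappa>D (d_pre w)"
proof (cases w rule: cyl_vertex_cases)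
  case (H v)
  then show ?thesis using w that[of v 0] by (simp add: d_pre_def)
next
  case (mid v t)
  have "level (c_pre z) = level (d_pre w)" using level_key[OF c_pre_vert[OF z] d_pre_vert[OF w] key] .
  then have "t \<le> p" using c_pre_level[OF z] mid by (simp add: d_pre_def level_def)
  then show ?thesis using w mid that[of v t] by (simp add: d_pre_def)
next
  case (K k)
  then have key_K: "\<kappa>D (c_pre z) = Inr (Inr k)" using key by (simp add: d_pre_def cyl_key_def)
  obtain v where "v \<in> verts G" "\<kappa>D (Inr (Inl (v, mB))) = Inr (Inr k)"
  proof (cases z rule: cyl_vertex_cases)
    case (mid v t)
    then show ?thesis using z key_K that[of v] by (auto simp: c_pre_def cyl_key_def split: if_splits)
  next
    case (K v)
    then show ?thesis using z key_K that[of v] by (simp add: c_pre_def)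
  qed (use key_K in \<open>simp add: c_pre_def cyl_key_def\<close>)
  then show ?thesis using K that[of v p] by (simp add: d_pre_def cyl_key_def)
qed

lemma pullback_verts:
  assumes z: "z \<in> verts B" and w: "w \<in> verts C" and eq: "c z = d w"
  shows "\<exists>x\<in>verts A. a x = z \<and> b x = w"
proof -
  obtain zr wr where r: "zr \<in> VB" "z = clB zr" "wr \<in> VC" "w = clC wr" using z w verts_B verts_C by auto
  have "clD (c_pre zr) = clD (d_pre wr)" using eq r c_class d_class by simp
  then have key: "\<kappa>D (c_pre zr) = \<kappa>D (d_pre wr)"
    using key_class_eq_iff[OF c_pre_vert[OF r(1)], of \<kappa>D] by simp
  obtain v t where vt: "v \<in> verts G" "t \<le> p" "\<kappa>D (Inr (Inl (v, t + q1))) = \<kappa>D (d_pre wr)"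
    using pullback_rep[OF r(1,3) key] .
  have mid: "Inr (Inl (v, t + q1)) \<in> VB" "Inr (Inl (v, t)) \<in> VC" using vt by simp_all
  have "\<kappa>D (c_pre (Inr (Inl (v, t + q1)))) = \<kappa>D (c_pre zr)"
    using vt key by (simp add: c_pre_def)
  then have "clB (Inr (Inl (v, t + q1))) = z"
    using c_pre_key_iff[OF mid(1) r(1)] key_class_eq_iff[OF mid(1), of \<kappa>B] r(2) by simp
  moreover have "\<kappa>D (d_pre (Inr (Inl (v, t)))) = \<kappa>D (d_pre wr)"
    using vt by (simp add: d_pre_def)
  then have "clC (Inr (Inl (v, t))) = w"
    using d_pre_key_iff[OF mid(2) r(3)] key_class_eq_iff[OF mid(2), of \<kappa>C] r(4) by simp
  ultimately show ?thesis using a_eq b_eq vt by (intro bexI[of _ "(v, t)"]) (auto simp: verts_A)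
qed

lemma class_B_mid:
  "y \<in> clB (Inr (Inl (v, s))) \<Longrightarrow> 1 \<le> s \<Longrightarrow> s \<le> mB \<Longrightarrow>
     y = Inr (Inl (v, s)) \<or> (s = mB \<and> y = Inr (Inr v))"
  by (cases y rule: cyl_vertex_cases) (auto simp: mem_key_class_iff cyl_key_id_right_def split: if_splits)

lemma class_C_mid:
  "y \<in> clC (Inr (Inl (v, t))) \<Longrightarrow> t < mC \<Longrightarrow> y = Inr (Inl (v, t)) \<or> (t = 0 \<and> y = Inl v)"
  by (cases y rule: cyl_vertex_cases) (auto simp: mem_key_class_iff cyl_key_id_left_def split: if_splits)

lemma pullback_edges:
  assumes x1: "x1 \<in> verts A" and x2: "x2 \<in> verts A"
    and eB: "edge B (a x1) (a x2)" and eC: "edge C (b x1) (b x2)"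
  shows "edge A x1 x2"
proof -
  obtain v1 t1 v2 t2 where x: "x1 = (v1, t1)" "x2 = (v2, t2)" "v1 \<in> verts G" "v2 \<in> verts G" "t1 \<le> p" "t2 \<le> p"
    using x1 x2 by (auto simp: verts_A)
  show ?thesis
  proof (cases "1 \<le> q1")
    case True
    obtain y1 y2 where y: "y1 \<in> clB (Inr (Inl (v1, t1 + q1)))" "y2 \<in> clB (Inr (Inl (v2, t2 + q1)))" "edge PB y1 y2"
      using eB x a_eq unfolding edge_B by auto
    have "y1 = Inr (Inl (v1, t1 + q1)) \<or> (t1 + q1 = mB \<and> y1 = Inr (Inr v1))"
      "y2 = Inr (Inl (v2, t2 + q1)) \<or> (t2 + q1 = mB \<and> y2 = Inr (Inr v2))"
      using class_B_mid[OF y(1)] class_B_mid[OF y(2)] True x by simp_all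
    then show ?thesis using y(3) x by (auto simp: edge_A)
  next
    case False
    then have "q1 = 0" "1 \<le> q2" using q1_or_q2 by auto
    obtain y1 y2 where y: "y1 \<in> clC (Inr (Inl (v1, t1)))" "y2 \<in> clC (Inr (Inl (v2, t2)))" "edge PC y1 y2"
      using eC x b_eq unfolding edge_C by auto
    have "y1 = Inr (Inl (v1, t1)) \<or> (t1 = 0 \<and> y1 = Inl v1)" "y2 = Inr (Inl (v2, t2)) \<or> (t2 = 0 \<and> y2 = Inl v2)"
      using class_C_mid[OF y(1)] class_C_mid[OF y(2)] \<open>1 \<le> q2\<close> x by simp_all
    then show ?thesis using y(3) x by (auto simp: edge_A)
  qed
qed

theorem cyl_square_holds: "cyl_square G H K f g p q1 q2"
proof -
  interpret skeletal_pushout_criterion "Suc p" A B C D a b c d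
    by (unfold_locales; (rule a_map b_map c_map d_map commutes inj_c inj_d pullback_verts pullback_edges
        cubes_lift; assumption?))
  show ?thesis unfolding cyl_square_def by (rule skel_pushout)
qed

end

theorem lemma2p18:
  fixes G :: "'g graph" and H :: "'h graph" and K :: "'k graph"
    and f :: "'g \<Rightarrow> 'h" and g :: "'g \<Rightarrow> 'k"
  assumes "is_graph G" and "is_graph H" and "is_graph K"
    and "graph_map G H f" and "graph_map G K g"
  shows "(\<forall>p q1 q2. 1 \<le> q1 \<longrightarrow> 1 \<le> q2 \<longrightarrow> cyl_square G H K f g p q1 q2)
       \<and> (inj_on f (verts G) \<longrightarrow> (\<forall>p q2. 1 \<le> q2 \<longrightarrow> cyl_square G H K f g p 0 q2))
       \<and> (inj_on g (verts G) \<longrightarrow> (\<forall>p q1. 1 \<le> q1 \<longrightarrow> cyl_square G H K f g p q1 0))"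
proof (intro conjI allI impI)
  fix p q1 q2 :: nat assume "1 \<le> q1" "1 \<le> q2"
  then interpret cylinder_square G H K f g p q1 q2 using assms by unfold_locales auto
  show "cyl_square G H K f g p q1 q2" by (rule cyl_square_holds)
next
  fix p q2 :: nat assume "inj_on f (verts G)" "1 \<le> q2"
  then interpret cylinder_square G H K f g p 0 q2 using assms by unfold_locales auto
  show "cyl_square G H K f g p 0 q2" by (rule cyl_square_holds)
next
  fix p q1 :: nat assume "inj_on g (verts G)" "1 \<le> q1"
  then interpret cylinder_square G H K f g p q1 0 using assms by unfold_locales auto
  show "cyl_square G H K f g p q1 0" by (rule cyl_square_holds)
qed

end
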